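(* Let $\langle P_0;\le_0\rangle$ and $\langle P_1;\le_1\rangle$ be bounded ordered sets and let $\psi\colon P_0\to P_1$ be a $0$-separating $\{0,1\}$-preserving monotone map. Then there exist a bounded lattice $L_1$, a $\{0,1\}$-sublattice $L_0$ of $L_1$, and order isomorphisms $\xi_0\colon\langle P_0;\le_0\rangle\to\langle\mathrm{Princ}(L_0);\subseteq\rangle$ and $\xi_1\colon\langle P_1;\le_1\rangle\to\langle\mathrm{Princ}(L_1);\subseteq\rangle$ such that $\psi=\xi_1^{-1}\circ\zeta_{L_0,L_1}\circ\xi_0$.
   Context: An ordered set is bounded if it has a least element $0$ and a greatest element $1$; a lattice is bounded if it has $0$ and $1$. For bounded ordered sets $P,Q$, a map $\psi\colon P\to Q$ is a $\{0,1\}$-preserving monotone map if $\psi(0_P)=0_Q$, $\psi(1_P)=1_Q$ and $x\le_P y$ implies $\psi(x)\le_Q\psi(y)$; it is $0$-separating if moreover $\psi^{-1}(0_Q)=\{0_P\}$. For a lattice $L$ and $x,y\in L$, $\mathrm{con}_L(x,y)$ denotes the smallest congruence of $L$ containing $(x,y)$, and $\mathrm{Princ}(L)$ is the set of such principal congruences of $L$, ordered by inclusion. A $\{0,1\}$-sublattice of a bounded lattice $L$ is a sublattice containing $0_L$ and $1_L$. For a $\{0,1\}$-sublattice $L_0$ of $L_1$, $\zeta_{L_0,L_1}\colon\mathrm{Princ}(L_0)\to\mathrm{Princ}(L_1)$ is defined by $\mathrm{con}_{L_0}(x,y)\mapsto\mathrm{con}_{L_1}(x,y)$. Maps are composed right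 to left. *)

theory Defs
  imports Main
begin

definition partial_order_on' :: "'a set \<Rightarrow> ('a \<Rightarrow> 'a \<Rightarrow> bool) \<Rightarrow> bool" where
  "partial_order_on' P le \<longleftrightarrow>
     (\<forall>x\<in>P. le x x) \<and>
     (\<forall>x\<in>P. \<forall>y\<in>P. le x y \<and> le y x \<longrightarrow> x = y) \<and>
     (\<forall>x\<in>P. \<forall>y\<in>P. \<forall>z\<in>P. le x y \<and> le y z \<longrightarrow> le x z)"

definition is_least :: "'a set \<Rightarrow> ('a \<Rightarrow> 'a \<Rightarrow> bool) \<Rightarrow> 'a \<Rightarrow> bool" where
  "is_least P le a \<longleftrightarrow> a \<in> P \<and> (\<forall>x\<in>P. le a x)"

definition is_greatest :: "'a set \<Rightarrow> ('a \<Rightarrow> 'a \<Rightarrow> bool) \<Rightarrow> 'a \<Rightarrow> bool" where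
  "is_greatest P le a \<longleftrightarrow> a \<in> P \<and> (\<forall>x\<in>P. le x a)"

definition bounded_ordered_set :: "'a set \<Rightarrow> ('a \<Rightarrow> 'a \<Rightarrow> bool) \<Rightarrow> bool" where
  "bounded_ordered_set P le \<longleftrightarrow> partial_order_on' P le \<and>
     (\<exists>a. is_least P le a) \<and> (\<exists>b. is_greatest P le b)"

definition is_lub :: "'a set \<Rightarrow> ('a \<Rightarrow> 'a \<Rightarrow> bool) \<Rightarrow> 'a \<Rightarrow> 'a \<Rightarrow> 'a \<Rightarrow> bool" where
  "is_lub L le x y s \<longleftrightarrow> s \<in> L \<and> le x s \<and> le y s \<and> (\<forall>z\<in>L. le x z \<and> le y z \<longrightarrow> le s z)"

definition is_glb :: "'a set \<Rightarrow> ('a \<Rightarrow> 'a \<Rightarrow> bool) \<Rightarrow> 'a \<Rightarrow> 'a \<Rightarrow> 'a \<Rightarrow> bool" where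
  "is_glb L le x y s \<longleftrightarrow> s \<in> L \<and> le s x \<and> le s y \<and> (\<forall>z\<in>L. le z x \<and> le z y \<longrightarrow> le z s)"

definition is_lattice :: "'a set \<Rightarrow> ('a \<Rightarrow> 'a \<Rightarrow> bool) \<Rightarrow> bool" where
  "is_lattice L le \<longleftrightarrow> partial_order_on' L le \<and>
     (\<forall>x\<in>L. \<forall>y\<in>L. (\<exists>s. is_lub L le x y s) \<and> (\<exists>m. is_glb L le x y m))"

definition bounded_lattice :: "'a set \<Rightarrow> ('a \<Rightarrow> 'a \<Rightarrow> bool) \<Rightarrow> bool" where
  "bounded_lattice L le \<longleftrightarrow> is_lattice L le \<and>
     (\<exists>a. is_least L le a) \<and> (\<exists>b. is_greatest L le b)"

definition ljoin :: "'a set \<Rightarrow> ('a \<Rightarrow> 'a \<Rightarrow> bool) \<Rightarrow> 'a \<Rightarrow> 'a \<Rightarrow> 'a" where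
  "ljoin L le x y = (THE s. is_lub L le x y s)"

definition lmeet :: "'a set \<Rightarrow> ('a \<Rightarrow> 'a \<Rightarrow> bool) \<Rightarrow> 'a \<Rightarrow> 'a \<Rightarrow> 'a" where
  "lmeet L le x y = (THE m. is_glb L le x y m)"

definition zo_sublattice :: "'a set \<Rightarrow> 'a set \<Rightarrow> ('a \<Rightarrow> 'a \<Rightarrow> bool) \<Rightarrow> bool" where
  "zo_sublattice L0 L1 le \<longleftrightarrow> L0 \<subseteq> L1 \<and>
     (\<forall>x\<in>L0. \<forall>y\<in>L0. ljoin L1 le x y \<in> L0 \<and> lmeet L1 le x y \<in> L0) \<and>
     (\<forall>a. is_least L1 le a \<longrightarrow> a \<in> L0) \<and>
     (\<forall>b. is_greatest L1 le b \<longrightarrow> b \<in> L0)"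

definition lattice_congruence :: "'a set \<Rightarrow> ('a \<Rightarrow> 'a \<Rightarrow> bool) \<Rightarrow> ('a \<times> 'a) set \<Rightarrow> bool" where
  "lattice_congruence L le \<theta> \<longleftrightarrow> equiv L \<theta> \<and>
     (\<forall>a b c d. (a, b) \<in> \<theta> \<and> (c, d) \<in> \<theta> \<longrightarrow>
        (ljoin L le a c, ljoin L le b d) \<in> \<theta> \<and> (lmeet L le a c, lmeet L le b d) \<in> \<theta>)"

definition con :: "'a set \<Rightarrow> ('a \<Rightarrow> 'a \<Rightarrow> bool) \<Rightarrow> 'a \<Rightarrow> 'a \<Rightarrow> ('a \<times> 'a) set" where
  "con L le x y = \<Inter> {\<theta>. lattice_congruence L le \<theta> \<and> (x, y) \<in> \<theta>}"

definition Princ :: "'a set \<Rightarrow> ('a \<Rightarrow> 'a \<Rightarrow> bool) \<Rightarrow> ('a \<times> 'a) set set" where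
  "Princ L le = {con L le x y | x y. x \<in> L \<and> y \<in> L}"

definition order_iso_Princ ::
  "'b set \<Rightarrow> ('b \<Rightarrow> 'b \<Rightarrow> bool) \<Rightarrow> 'a set \<Rightarrow> ('a \<Rightarrow> 'a \<Rightarrow> bool) \<Rightarrow> ('b \<Rightarrow> ('a \<times> 'a) set) \<Rightarrow> bool" where
  "order_iso_Princ P leP L le \<xi> \<longleftrightarrow> bij_betw \<xi> P (Princ L le) \<and>
     (\<forall>x\<in>P. \<forall>y\<in>P. leP x y \<longleftrightarrow> \<xi> x \<subseteq> \<xi> y)"

end

theory Submission
  imports Defs
begin

text \<open>
  From colour data -- a set \<open>I\<close> of colours, directed edges \<open>G\<close>, symmetric edges \<open>Sy\<close>
  and witnessed colours \<open>Wt\<close> -- we build a finite-height ``gadget'' lattice: the bounds, an \<open>M\<^sub>3\<close>,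
  a prime interval \<open>a\<^sub>i < b\<^sub>i\<close> for every colour, the joins needed by the edges, and a relative
  complement of \<open>b\<^sub>i\<close> for every witnessed colour. Its principal congruences are exactly the
  identity, the full relation and one congruence per colour. A directed edge \<open>(i, j)\<close> forces
  colour \<open>i\<close> below colour \<open>j\<close>, a symmetric edge identifies two colours, a witness makes a colour
  full, and kernels of collapsing maps for admissible sets of colours show that nothing else
  is forced. Using the inner elements of \<open>P\<^sub>0\<close> as colours (with the strict order as edges) gives
  \<open>L\<^sub>0\<close> with \<open>Princ L\<^sub>0 \<cong> P\<^sub>0\<close>; adding the inner elements of \<open>P\<^sub>1\<close>, symmetric edges \<open>p \<longleftrightarrow> \<psi> p\<close> and
  witnesses for \<open>\<psi> p = 1\<close> gives \<open>L\<^sub>1 \<supseteq> L\<^sub>0\<close> with \<open>Princ L\<^sub>1 \<cong> P\<^sub>1\<close>, and \<open>\<zeta>\<close> becomes \<open>\<psi>\<close>.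
  The gadgets are finally transported along an injective encoding into sets over
  \<open>'a + 'b + nat\<close>; the degenerate case \<open>0 = 1\<close> is realised by the one-element lattice.
\<close>

lemma ljoin_eqI:
  assumes "partial_order_on' M le" "is_lub M le a b s"
  shows "ljoin M le a b = s"
  unfolding ljoin_def
proof (rule the_equality)
  fix t assume "is_lub M le a b t"
  then have "t \<in> M" "s \<in> M" "le t s" "le s t" using assms(2) unfolding is_lub_def by auto
  then show "t = s" using assms(1) unfolding partial_order_on'_def by blast
qed (rule assms(2))

lemma lmeet_eqI:
  assumes "partial_order_on' M le" "is_glb M le a b s"
  shows "lmeet M le a b = s"
  unfolding lmeet_def
proof (rule the_equality)
  fix t assume "is_glb M le a b t"
  then have "t \<in> M" "s \<in> M" "le t s" "le s t" using assms(2) unfolding is_glb_def by auto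
  then show "t = s" using assms(1) unfolding partial_order_on'_def by blast
qed (rule assms(2))

lemma ljoin_lub:
  assumes "is_lattice M le" "a \<in> M" "b \<in> M"
  shows "is_lub M le a b (ljoin M le a b)"
proof -
  obtain s where s: "is_lub M le a b s" using assms unfolding is_lattice_def by blast
  moreover have "partial_order_on' M le" using assms(1) unfolding is_lattice_def by blast
  ultimately have "ljoin M le a b = s" by (rule ljoin_eqI[rotated])
  with s show ?thesis by simp
qed

lemma lmeet_glb:
  assumes "is_lattice M le" "a \<in> M" "b \<in> M"
  shows "is_glb M le a b (lmeet M le a b)"
proof -
  obtain m where m: "is_glb M le a b m" using assms unfolding is_lattice_def by blast
  moreover have "partial_order_on' M le" using assms(1) unfolding is_lattice_def by blast
  ultimately have "lmeet M le a b = m" by (rule lmeet_eqI[rotated])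
  with m show ?thesis by simp
qed

lemma ljoin_closed: "is_lattice M le \<Longrightarrow> a \<in> M \<Longrightarrow> b \<in> M \<Longrightarrow> ljoin M le a b \<in> M"
  using ljoin_lub[of M le a b] unfolding is_lub_def by simp

lemma lmeet_closed: "is_lattice M le \<Longrightarrow> a \<in> M \<Longrightarrow> b \<in> M \<Longrightarrow> lmeet M le a b \<in> M"
  using lmeet_glb[of M le a b] unfolding is_glb_def by simp

lemma ljoin_commute: "is_lattice M le \<Longrightarrow> a \<in> M \<Longrightarrow> b \<in> M \<Longrightarrow> ljoin M le a b = ljoin M le b a"
  using ljoin_lub[of M le b a] by (intro ljoin_eqI) (auto simp: is_lattice_def is_lub_def)

lemma lmeet_commute: "is_lattice M le \<Longrightarrow> a \<in> M \<Longrightarrow> b \<in> M \<Longrightarrow> lmeet M le a b = lmeet M le b a"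
  using lmeet_glb[of M le b a] by (intro lmeet_eqI) (auto simp: is_lattice_def is_glb_def)

text \<open>The congruence generated by a pair is the intersection of all congruences containing it;
  in a lattice the full relation is a congruence, so this intersection is itself a congruence.\<close>

lemma full_relation_congruence: "is_lattice L le \<Longrightarrow> lattice_congruence L le (L \<times> L)"
  unfolding lattice_congruence_def
  by (auto simp: equiv_def refl_on_def sym_def trans_def intro: ljoin_closed lmeet_closed)

lemma con_congruence:
  assumes "is_lattice L le" "x \<in> L" "y \<in> L"
  shows "lattice_congruence L le (con L le x y)"
proof -
  define \<Theta> where "\<Theta> = {\<theta>. lattice_congruence L le \<theta> \<and> (x, y) \<in> \<theta>}"
  have full: "L \<times> L \<in> \<Theta>" using full_relation_congruence[OF assms(1)] assms by (auto simp: \<Theta>_def)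
  have "equiv L (\<Inter>\<Theta>)"
  proof (rule equivI)
    show "\<Inter>\<Theta> \<subseteq> L \<times> L" using full by blast
    show "refl_on L (\<Inter>\<Theta>)"
      unfolding refl_on_def by (auto simp: \<Theta>_def lattice_congruence_def equiv_def refl_on_def)
    show "sym (\<Inter>\<Theta>)"
      unfolding sym_def by (auto simp: \<Theta>_def lattice_congruence_def equiv_def sym_def)
    show "trans (\<Inter>\<Theta>)"
      unfolding trans_def by (auto simp: \<Theta>_def lattice_congruence_def equiv_def dest: transD)
  qed
  moreover have "\<forall>a b c d. (a, b) \<in> \<Inter>\<Theta> \<and> (c, d) \<in> \<Inter>\<Theta> \<longrightarrow>
      (ljoin L le a c, ljoin L le b d) \<in> \<Inter>\<Theta> \<and> (lmeet L le a c, lmeet L le b d) \<in> \<Inter>\<Theta>"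
    by (auto simp: \<Theta>_def lattice_congruence_def)
  ultimately show ?thesis unfolding lattice_congruence_def con_def \<Theta>_def by blast
qed

lemma con_mem: "is_lattice L le \<Longrightarrow> x \<in> L \<Longrightarrow> y \<in> L \<Longrightarrow> (x, y) \<in> con L le x y"
  unfolding con_def by (rule InterI) simp

lemma con_least: "lattice_congruence L le \<theta> \<Longrightarrow> (x, y) \<in> \<theta> \<Longrightarrow> con L le x y \<subseteq> \<theta>"
  unfolding con_def by (rule Inter_lower) simp

lemma cong_sub: "lattice_congruence L le \<theta> \<Longrightarrow> \<theta> \<subseteq> L \<times> L"
  unfolding lattice_congruence_def equiv_def by simp

lemma cong_refl: "lattice_congruence L le \<theta> \<Longrightarrow> a \<in> L \<Longrightarrow> (a, a) \<in> \<theta>"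
  unfolding lattice_congruence_def equiv_def refl_on_def by simp

lemma cong_sym: "lattice_congruence L le \<theta> \<Longrightarrow> (a, b) \<in> \<theta> \<Longrightarrow> (b, a) \<in> \<theta>"
  unfolding lattice_congruence_def equiv_def by (meson symD)

lemma cong_trans: "lattice_congruence L le \<theta> \<Longrightarrow> (a, b) \<in> \<theta> \<Longrightarrow> (b, c) \<in> \<theta> \<Longrightarrow> (a, c) \<in> \<theta>"
  unfolding lattice_congruence_def equiv_def by (meson transD)

lemma cong_join: "lattice_congruence L le \<theta> \<Longrightarrow> (a, b) \<in> \<theta> \<Longrightarrow> c \<in> L \<Longrightarrow>
    (ljoin L le a c, ljoin L le b c) \<in> \<theta>"
  using cong_refl[of L le \<theta> c] unfolding lattice_congruence_def by blast

lemma cong_meet: "lattice_congruence L le \<theta> \<Longrightarrow> (a, b) \<in> \<theta> \<Longrightarrow> c \<in> L \<Longrightarrow>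
    (lmeet L le a c, lmeet L le b c) \<in> \<theta>"
  using cong_refl[of L le \<theta> c] unfolding lattice_congruence_def by blast

lemma con_subI: "is_lattice L le \<Longrightarrow> x \<in> L \<Longrightarrow> y \<in> L \<Longrightarrow>
    (u, v) \<in> con L le x y \<Longrightarrow> con L le u v \<subseteq> con L le x y"
  by (intro con_least con_congruence)

lemma con_eqI: "is_lattice L le \<Longrightarrow> x \<in> L \<Longrightarrow> y \<in> L \<Longrightarrow> u \<in> L \<Longrightarrow> v \<in> L \<Longrightarrow>
    (u, v) \<in> con L le x y \<Longrightarrow> (x, y) \<in> con L le u v \<Longrightarrow> con L le x y = con L le u v"
  by (intro subset_antisym con_least con_congruence) auto

lemma lmeet_absorb:
  assumes "is_lattice L le" "a \<in> L" "b \<in> L" "le a b"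
  shows "lmeet L le a b = a" "lmeet L le b a = a"
proof -
  have po: "partial_order_on' L le" using assms(1) unfolding is_lattice_def by blast
  then have "le a a" using assms(2) unfolding partial_order_on'_def by blast
  then show "lmeet L le a b = a" "lmeet L le b a = a"
    using assms(2,4) by (auto intro!: lmeet_eqI[OF po] simp: is_glb_def)
qed

lemma ljoin_absorb:
  assumes "is_lattice L le" "a \<in> L" "b \<in> L" "le a b"
  shows "ljoin L le a b = b" "ljoin L le b a = b"
proof -
  have po: "partial_order_on' L le" using assms(1) unfolding is_lattice_def by blast
  then have "le b b" using assms(3) unfolding partial_order_on'_def by blast
  then show "ljoin L le a b = b" "ljoin L le b a = b"
    using assms(3,4) by (auto intro!: ljoin_eqI[OF po] simp: is_lub_def)
qed

lemma Id_on_congruence: "is_lattice L le \<Longrightarrow> lattice_congruence L le (Id_on L)"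
  unfolding lattice_congruence_def equiv_def refl_on_def sym_def trans_def
  using ljoin_closed lmeet_closed by (auto simp: Id_on_def)

lemma con_refl_Id:
  assumes "is_lattice L le" "x \<in> L"
  shows "con L le x x = Id_on L"
proof
  show "con L le x x \<subseteq> Id_on L" using assms by (intro con_least[OF Id_on_congruence]) auto
  show "Id_on L \<subseteq> con L le x x" using cong_refl[OF con_congruence[OF assms(1,2,2)]] by auto
qed

lemma congruence_collapsing_bounds:
  assumes L: "is_lattice L le" and \<theta>: "lattice_congruence L le \<theta>"
    and "is_least L le z" "is_greatest L le u" "(z, u) \<in> \<theta>"
  shows "\<theta> = L \<times> L"
proof
  show "\<theta> \<subseteq> L \<times> L" by (rule cong_sub[OF \<theta>])
  have "(z, x) \<in> \<theta>" if x: "x \<in> L" for x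
  proof -
    have z: "z \<in> L" "le z x" and u: "u \<in> L" "le x u"
      using assms(3,4) x unfolding is_least_def is_greatest_def by auto
    have "(lmeet L le z x, lmeet L le u x) \<in> \<theta>" by (rule cong_meet[OF \<theta> assms(5) x])
    then show ?thesis using lmeet_absorb[OF L z(1) x z(2)] lmeet_absorb[OF L x u] by simp
  qed
  then show "L \<times> L \<subseteq> \<theta>" using cong_sym[OF \<theta>] cong_trans[OF \<theta>] by blast
qed

lemma con_meet_join:
  assumes L: "is_lattice L le" and x: "x \<in> L" and y: "y \<in> L"
  shows "con L le x y = con L le (lmeet L le x y) (ljoin L le x y)"
proof -
  define m j where "m = lmeet L le x y" and "j = ljoin L le x y"
  have m: "m \<in> L" "le m x" "le m y" using lmeet_glb[OF L x y] unfolding m_def is_glb_def by auto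
  have j: "j \<in> L" "le x j" "le y j" using ljoin_lub[OF L x y] unfolding j_def is_lub_def by auto
  have y_le: "le y y" using L y unfolding is_lattice_def partial_order_on'_def by blast
  note \<theta> = con_congruence[OF L x y] and \<theta>' = con_congruence[OF L m(1) j(1)]
  have "(lmeet L le x y, lmeet L le y y) \<in> con L le x y" "(ljoin L le x y, ljoin L le y y) \<in> con L le x y"
    using cong_meet[OF \<theta>] cong_join[OF \<theta>] con_mem[OF L x y] y by auto
  then have "(m, y) \<in> con L le x y" "(j, y) \<in> con L le x y"
    using lmeet_absorb[OF L y y y_le] ljoin_absorb[OF L y y y_le] unfolding m_def j_def by auto
  then have mj: "(m, j) \<in> con L le x y" using cong_sym[OF \<theta>] cong_trans[OF \<theta>] by blast
  have "(lmeet L le m x, lmeet L le j x) \<in> con L le m j" "(lmeet L le m y, lmeet L le j y) \<in> con L le m j"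
    using cong_meet[OF \<theta>'] con_mem[OF L m(1) j(1)] x y by auto
  then have "(m, x) \<in> con L le m j" "(m, y) \<in> con L le m j"
    using lmeet_absorb[OF L m(1) x m(2)] lmeet_absorb[OF L x j(1,2)]
      lmeet_absorb[OF L m(1) y m(3)] lmeet_absorb[OF L y j(1,3)] by auto
  then have "(x, y) \<in> con L le m j" using cong_sym[OF \<theta>'] cong_trans[OF \<theta>'] by blast
  then show ?thesis using con_eqI[OF L x y m(1) j(1) mj] unfolding m_def j_def by blast
qed

lemma con_perspective:
  assumes L: "is_lattice L le" and "x \<in> L" "y \<in> L" "c \<in> L" "d \<in> L"
    and "lmeet L le x c = u" "lmeet L le y c = v" "ljoin L le u d = x" "ljoin L le v d = y"
  shows "con L le x y = con L le u v"
proof -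
  have uv: "u \<in> L" "v \<in> L" using lmeet_closed[OF L] assms(2-4,6,7) by blast+
  show ?thesis
  proof (rule con_eqI[OF L assms(2,3) uv])
    show "(u, v) \<in> con L le x y"
      using cong_meet[OF con_congruence[OF L assms(2,3)] con_mem[OF L assms(2,3)] assms(4)] assms by simp
    show "(x, y) \<in> con L le u v"
      using cong_join[OF con_congruence[OF L uv] con_mem[OF L uv] assms(5)] assms by simp
  qed
qed

lemma bounded_order_embedding:
  assumes po: "partial_order_on' P le" and bot: "is_least P le b" and top: "is_greatest P le t"
    and between: "\<And>p. p \<in> P \<Longrightarrow> \<xi> b \<subseteq> \<xi> p \<and> \<xi> p \<subseteq> \<xi> t"
    and ends: "\<not> \<xi> t \<subseteq> \<xi> b"
    and inner: "\<And>p. p \<in> P - {b, t} \<Longrightarrow> \<not> \<xi> p \<subseteq> \<xi> b \<and> \<not> \<xi> t \<subseteq> \<xi> p"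
    and inner_ord: "\<And>p q. p \<in> P - {b, t} \<Longrightarrow> q \<in> P - {b, t} \<Longrightarrow> le p q \<longleftrightarrow> \<xi> p \<subseteq> \<xi> q"
    and p: "p \<in> P" and q: "q \<in> P"
  shows "le p q \<longleftrightarrow> \<xi> p \<subseteq> \<xi> q"
proof -
  have b: "b \<in> P" "\<And>x. x \<in> P \<Longrightarrow> le b x" and t: "t \<in> P" "\<And>x. x \<in> P \<Longrightarrow> le x t"
    using bot top unfolding is_least_def is_greatest_def by auto
  have antisym: "\<And>x y. x \<in> P \<Longrightarrow> y \<in> P \<Longrightarrow> le x y \<Longrightarrow> le y x \<Longrightarrow> x = y"
    using po unfolding partial_order_on'_def by blast
  have not_top_le: "\<not> \<xi> t \<subseteq> \<xi> x" if "x \<in> P" "x \<noteq> t" for x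
    using that ends inner[of x] by (cases "x = b") auto
  have not_le_bot: "\<not> \<xi> x \<subseteq> \<xi> b" if "x \<in> P" "x \<noteq> b" for x
    using that ends inner[of x] by (cases "x = t") auto
  consider "p = b" | "q = t" | "p = t" "q \<noteq> t" | "q = b" "p \<noteq> b" | "p \<in> P - {b, t}" "q \<in> P - {b, t}"
    using p q by blast
  then show ?thesis
  proof cases
    case 1 then show ?thesis using b(2)[OF q] between[OF q] by simp
  next
    case 2 then show ?thesis using t(2)[OF p] between[OF p] by simp
  next
    case 3 then show ?thesis using not_top_le[OF q] antisym[OF q t(1) t(2)[OF q]] by auto
  next
    case 4 then show ?thesis using not_le_bot[OF p] antisym[OF p b(1) _ b(2)[OF p]] by auto
  next
    case 5 then show ?thesis by (rule inner_ord)
  qed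
qed

lemma order_iso_PrincI:
  assumes po: "partial_order_on' P le" and onto: "\<xi> ` P = Princ L le'"
    and ord: "\<And>p q. p \<in> P \<Longrightarrow> q \<in> P \<Longrightarrow> le p q \<longleftrightarrow> \<xi> p \<subseteq> \<xi> q"
  shows "order_iso_Princ P le L le' \<xi>"
proof -
  have "inj_on \<xi> P"
  proof (rule inj_onI)
    fix p q assume pq: "p \<in> P" "q \<in> P" "\<xi> p = \<xi> q"
    then have "le p q" "le q p" using ord[of p q] ord[of q p] by auto
    then show "p = q" using pq(1,2) po unfolding partial_order_on'_def by blast
  qed
  then show ?thesis unfolding order_iso_Princ_def bij_betw_def using onto ord by blast
qed

lemma Princ_subset:
  assumes "is_lattice L le" "\<theta> \<in> Princ L le"
  shows "\<theta> \<subseteq> L \<times> L"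
proof -
  obtain x y where "x \<in> L" "y \<in> L" "\<theta> = con L le x y" using assms(2) unfolding Princ_def by blast
  then show ?thesis using cong_sub[OF con_congruence[OF assms(1)]] by simp
qed

lemma least_eq_greatest_singleton:
  assumes "partial_order_on' P le" "is_least P le b" "is_greatest P le b"
  shows "P = {b}"
proof -
  have "x = b" if "x \<in> P" for x
  proof -
    have "le x b" "le b x" "b \<in> P" using that assms(2,3) unfolding is_least_def is_greatest_def by auto
    then show ?thesis using that assms(1) unfolding partial_order_on'_def by blast
  qed
  then show ?thesis using assms(2) unfolding is_least_def by blast
qed

section \<open>Transporting a lattice along an injection\<close>

text \<open>An injection \<open>f\<close> defined on a lattice \<open>L\<close> carries the order to \<open>f ` L\<close>; joins, meets,
  congruences and principal congruences correspond, the latter via the image \<open>tmap\<close> of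
  relations. Everything is stated for sublattices \<open>M\<close> of \<open>L\<close> so that a sublattice and the
  ambient lattice can be transported at once.\<close>

locale inj_transport =
  fixes f :: "'x \<Rightarrow> 'y" and L :: "'x set" and le :: "'x \<Rightarrow> 'x \<Rightarrow> bool"
  assumes inj: "inj_on f L"
begin

definition tle :: "'y \<Rightarrow> 'y \<Rightarrow> bool" where
  "tle X Y \<longleftrightarrow> (\<exists>x\<in>L. \<exists>y\<in>L. X = f x \<and> Y = f y \<and> le x y)"

definition tmap :: "('x \<times> 'x) set \<Rightarrow> ('y \<times> 'y) set" where
  "tmap \<theta> = map_prod f f ` \<theta>"

definition tpull :: "'x set \<Rightarrow> ('y \<times> 'y) set \<Rightarrow> ('x \<times> 'x) set" where
  "tpull M \<theta>' = {(x, y). x \<in> M \<and> y \<in> M \<and> (f x, f y) \<in> \<theta>'}"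

lemma tle_image [simp]: "x \<in> L \<Longrightarrow> y \<in> L \<Longrightarrow> tle (f x) (f y) \<longleftrightarrow> le x y"
  unfolding tle_def using inj by (auto dest: inj_onD)

lemma f_eq_iff[simp]: "x \<in> L \<Longrightarrow> y \<in> L \<Longrightarrow> f x = f y \<longleftrightarrow> x = y"
  using inj by (auto dest: inj_onD)

context fixes M :: "'x set" assumes M_sub: "M \<subseteq> L"
begin

lemma in_L: "x \<in> M \<Longrightarrow> x \<in> L" using M_sub by auto

lemma ball_image: "(\<forall>Z\<in>f ` M. P Z) \<longleftrightarrow> (\<forall>z\<in>M. P (f z))" by auto

lemma is_lub_image: "a \<in> M \<Longrightarrow> b \<in> M \<Longrightarrow> s \<in> M \<Longrightarrow> is_lub (f ` M) tle (f a) (f b) (f s) \<longleftrightarrow> is_lub M le a b s"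
  unfolding is_lub_def using in_L by (auto simp: ball_image)
lemma is_glb_image: "a \<in> M \<Longrightarrow> b \<in> M \<Longrightarrow> s \<in> M \<Longrightarrow> is_glb (f ` M) tle (f a) (f b) (f s) \<longleftrightarrow> is_glb M le a b s"
  unfolding is_glb_def using in_L by (auto simp: ball_image)
lemma is_least_image: "a \<in> M \<Longrightarrow> is_least (f ` M) tle (f a) \<longleftrightarrow> is_least M le a"
  unfolding is_least_def using in_L by (auto simp: ball_image)
lemma is_greatest_image: "a \<in> M \<Longrightarrow> is_greatest (f ` M) tle (f a) \<longleftrightarrow> is_greatest M le a"
  unfolding is_greatest_def using in_L by (auto simp: ball_image)
lemma is_least_imageD: "is_least (f ` M) tle A \<Longrightarrow> \<exists>a\<in>M. A = f a \<and> is_least M le a"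
  using is_least_image unfolding is_least_def by blast
lemma is_greatest_imageD: "is_greatest (f ` M) tle A \<Longrightarrow> \<exists>a\<in>M. A = f a \<and> is_greatest M le a"
  using is_greatest_image unfolding is_greatest_def by blast

lemma partial_order_image: "partial_order_on' (f ` M) tle \<longleftrightarrow> partial_order_on' M le"
  unfolding partial_order_on'_def using in_L by (auto simp: ball_image)

lemma is_lattice_image: assumes "is_lattice M le" shows "is_lattice (f ` M) tle"
proof -
  have p: "partial_order_on' (f ` M) tle" using assms partial_order_image unfolding is_lattice_def by simp
  have q: "\<forall>X\<in>f ` M. \<forall>Y\<in>f ` M. (\<exists>s. is_lub (f ` M) tle X Y s) \<and> (\<exists>m. is_glb (f ` M) tle X Y m)"
  proof (intro ballI)
    fix X Y assume "X \<in> f ` M" "Y \<in> f ` M"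
    then obtain a b where ab: "a \<in> M" "b \<in> M" "X = f a" "Y = f b" by auto
    have "\<forall>x\<in>M. \<forall>y\<in>M. (\<exists>s. is_lub M le x y s) \<and> (\<exists>m. is_glb M le x y m)"
      using assms by (simp add: is_lattice_def)
    then obtain s m where sm: "is_lub M le a b s" "is_glb M le a b m" using ab by blast
    then have "s \<in> M" "m \<in> M" unfolding is_lub_def is_glb_def by auto
    then show "(\<exists>s. is_lub (f ` M) tle X Y s) \<and> (\<exists>m. is_glb (f ` M) tle X Y m)"
      using is_lub_image is_glb_image ab sm by blast
  qed
  show ?thesis unfolding is_lattice_def using p q by simp
qed

lemma bounded_lattice_image: assumes "bounded_lattice M le" shows "bounded_lattice (f ` M) tle"
proof -
  have l: "is_lattice M le" and a: "\<exists>a. is_least M le a" and b: "\<exists>b. is_greatest M le b"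
    using assms unfolding bounded_lattice_def by auto
  obtain a b where ab: "is_least M le a" "is_greatest M le b" using a b by blast
  then have "a \<in> M" "b \<in> M" unfolding is_least_def is_greatest_def by auto
  then have "is_least (f ` M) tle (f a)" "is_greatest (f ` M) tle (f b)" using ab is_least_image is_greatest_image by auto
  then show ?thesis unfolding bounded_lattice_def using is_lattice_image[OF l] by blast
qed

context assumes lat: "is_lattice M le"
begin

lemma partial_order_image_lattice: "partial_order_on' (f ` M) tle" using lat partial_order_image unfolding is_lattice_def by simp

lemma ljoin_image:
  assumes "a \<in> M" "b \<in> M"
  shows "ljoin (f ` M) tle (f a) (f b) = f (ljoin M le a b)"
proof (rule ljoin_eqI[OF partial_order_image_lattice])
  have "ljoin M le a b \<in> M" by (rule ljoin_closed[OF lat assms])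
  then show "is_lub (f ` M) tle (f a) (f b) (f (ljoin M le a b))"
    using is_lub_image[OF assms] ljoin_lub[OF lat assms] by simp
qed

lemma lmeet_image:
  assumes "a \<in> M" "b \<in> M"
  shows "lmeet (f ` M) tle (f a) (f b) = f (lmeet M le a b)"
proof (rule lmeet_eqI[OF partial_order_image_lattice])
  have "lmeet M le a b \<in> M" by (rule lmeet_closed[OF lat assms])
  then show "is_glb (f ` M) tle (f a) (f b) (f (lmeet M le a b))"
    using is_glb_image[OF assms] lmeet_glb[OF lat assms] by simp
qed

lemma tmap_tpull: "\<theta>' \<subseteq> f ` M \<times> f ` M \<Longrightarrow> tmap (tpull M \<theta>') = \<theta>'"
  unfolding tmap_def tpull_def by (auto simp: image_iff)

lemma tpull_congruence: assumes "lattice_congruence (f ` M) tle \<theta>'" shows "lattice_congruence M le (tpull M \<theta>')"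
proof -
  have e: "equiv (f ` M) \<theta>'" using assms unfolding lattice_congruence_def by simp
  have eq: "equiv M (tpull M \<theta>')"
    using e unfolding equiv_def refl_on_def sym_def trans_def tpull_def by blast
  show ?thesis unfolding lattice_congruence_def
  proof (intro conjI eq allI impI)
    fix a b c d assume h: "(a, b) \<in> tpull M \<theta>' \<and> (c, d) \<in> tpull M \<theta>'"
    then have m: "a \<in> M" "b \<in> M" "c \<in> M" "d \<in> M" "(f a, f b) \<in> \<theta>'" "(f c, f d) \<in> \<theta>'" unfolding tpull_def by auto
    then have "(ljoin (f ` M) tle (f a) (f c), ljoin (f ` M) tle (f b) (f d)) \<in> \<theta>'"
      "(lmeet (f ` M) tle (f a) (f c), lmeet (f ` M) tle (f b) (f d)) \<in> \<theta>'"
      using assms unfolding lattice_congruence_def by blast+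
    then show "(ljoin M le a c, ljoin M le b d) \<in> tpull M \<theta>'" "(lmeet M le a c, lmeet M le b d) \<in> tpull M \<theta>'"
      using m ljoin_image lmeet_image ljoin_closed[OF lat] lmeet_closed[OF lat] unfolding tpull_def by auto
  qed
qed

lemma tmap_congruence: assumes "lattice_congruence M le \<theta>" shows "lattice_congruence (f ` M) tle (tmap \<theta>)"
proof -
  have sub: "\<theta> \<subseteq> M \<times> M" using assms unfolding lattice_congruence_def equiv_def by simp
  have e: "equiv M \<theta>" using assms unfolding lattice_congruence_def by simp
  have eq: "equiv (f ` M) (tmap \<theta>)"
  proof (rule equivI)
    show "tmap \<theta> \<subseteq> f ` M \<times> f ` M" using sub unfolding tmap_def by auto
    show "refl_on (f ` M) (tmap \<theta>)" using e unfolding refl_on_def equiv_def tmap_def by (auto simp: image_iff) (metis map_prod_simp)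
    show "sym (tmap \<theta>)" using e unfolding sym_def equiv_def tmap_def by auto
    show "trans (tmap \<theta>)" unfolding trans_def tmap_def
    proof clarsimp
      fix a b c d assume "(a,b) \<in> \<theta>" "(c,d) \<in> \<theta>" "f b = f c"
      moreover then have "b \<in> M" "c \<in> M" using sub by auto
      ultimately have "(a,d) \<in> \<theta>" using e in_L unfolding equiv_def trans_def by (metis f_eq_iff)
      then show "(f a, f d) \<in> map_prod f f ` \<theta>" by force
    qed
  qed
  show ?thesis unfolding lattice_congruence_def
  proof (intro conjI eq allI impI)
    fix A B Cc D assume h: "(A, B) \<in> tmap \<theta> \<and> (Cc, D) \<in> tmap \<theta>"
    then obtain a b c d where m: "(a,b) \<in> \<theta>" "(c,d) \<in> \<theta>" "A = f a" "B = f b" "Cc = f c" "D = f d"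
      unfolding tmap_def by auto
    then have mm: "a \<in> M" "b \<in> M" "c \<in> M" "d \<in> M" using sub by auto
    have "(ljoin M le a c, ljoin M le b d) \<in> \<theta>" "(lmeet M le a c, lmeet M le b d) \<in> \<theta>"
      using assms m unfolding lattice_congruence_def by blast+
    then show "(ljoin (f ` M) tle A Cc, ljoin (f ` M) tle B D) \<in> tmap \<theta>" "(lmeet (f ` M) tle A Cc, lmeet (f ` M) tle B D) \<in> tmap \<theta>"
      using m mm ljoin_image lmeet_image unfolding tmap_def by force+
  qed
qed

lemma con_image: assumes "x \<in> M" "y \<in> M" shows "con (f ` M) tle (f x) (f y) = tmap (con M le x y)"
proof
  have c: "lattice_congruence M le (con M le x y)" by (rule con_congruence[OF lat assms])
  have "(x,y) \<in> con M le x y" by (rule con_mem[OF lat assms])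
  then have "(f x, f y) \<in> tmap (con M le x y)" unfolding tmap_def by force
  then show "con (f ` M) tle (f x) (f y) \<subseteq> tmap (con M le x y)" by (rule con_least[OF tmap_congruence[OF c]])
  have c': "lattice_congruence (f ` M) tle (con (f ` M) tle (f x) (f y))"
    by (rule con_congruence[OF is_lattice_image[OF lat]]) (use assms in auto)
  have sub': "con (f ` M) tle (f x) (f y) \<subseteq> f ` M \<times> f ` M" by (rule cong_sub[OF c'])
  have "(f x, f y) \<in> con (f ` M) tle (f x) (f y)" by (rule con_mem[OF is_lattice_image[OF lat]]) (use assms in auto)
  then have "(x, y) \<in> tpull M (con (f ` M) tle (f x) (f y))" using assms unfolding tpull_def by auto
  then have "con M le x y \<subseteq> tpull M (con (f ` M) tle (f x) (f y))" by (rule con_least[OF tpull_congruence[OF c']])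
  then have "tmap (con M le x y) \<subseteq> tmap (tpull M (con (f ` M) tle (f x) (f y)))" unfolding tmap_def by auto
  then show "tmap (con M le x y) \<subseteq> con (f ` M) tle (f x) (f y)" using tmap_tpull[OF sub'] by simp
qed

lemma Princ_image: "Princ (f ` M) tle = tmap ` Princ M le"
proof
  show "Princ (f ` M) tle \<subseteq> tmap ` Princ M le"
  proof
    fix \<theta> assume "\<theta> \<in> Princ (f ` M) tle"
    then obtain x y where "x \<in> M" "y \<in> M" "\<theta> = con (f ` M) tle (f x) (f y)" unfolding Princ_def by blast
    then show "\<theta> \<in> tmap ` Princ M le" using con_image unfolding Princ_def by blast
  qed
  show "tmap ` Princ M le \<subseteq> Princ (f ` M) tle"
  proof
    fix \<theta> assume "\<theta> \<in> tmap ` Princ M le"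
    then obtain x y where "x \<in> M" "y \<in> M" "\<theta> = tmap (con M le x y)" unfolding Princ_def by blast
    then have "\<theta> = con (f ` M) tle (f x) (f y)" using con_image by simp
    then show "\<theta> \<in> Princ (f ` M) tle" unfolding Princ_def using \<open>x \<in> M\<close> \<open>y \<in> M\<close> by blast
  qed
qed

end
end

lemma tmap_subset_iff: "\<theta>1 \<subseteq> L \<times> L \<Longrightarrow> \<theta>2 \<subseteq> L \<times> L \<Longrightarrow> tmap \<theta>1 \<subseteq> tmap \<theta>2 \<longleftrightarrow> \<theta>1 \<subseteq> \<theta>2"
proof
  assume s: "\<theta>1 \<subseteq> L \<times> L" "\<theta>2 \<subseteq> L \<times> L" "tmap \<theta>1 \<subseteq> tmap \<theta>2"
  show "\<theta>1 \<subseteq> \<theta>2"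
  proof clarify
    fix a b assume ab: "(a, b) \<in> \<theta>1"
    then have "(f a, f b) \<in> tmap \<theta>2" using s(3) unfolding tmap_def by force
    then obtain c d where cd: "(c, d) \<in> \<theta>2" "f a = f c" "f b = f d" unfolding tmap_def by auto
    have "a \<in> L" "b \<in> L" "c \<in> L" "d \<in> L" using ab cd s by auto
    then show "(a, b) \<in> \<theta>2" using cd f_eq_iff by metis
  qed
qed (auto simp: tmap_def)

lemma zo_sublattice_image:
  assumes L: "is_lattice L le" and sub: "zo_sublattice M0 L le"
  shows "zo_sublattice (f ` M0) (f ` L) tle"
proof -
  have M0: "M0 \<subseteq> L" using sub unfolding zo_sublattice_def by blast
  have ops: "ljoin (f ` L) tle (f x) (f y) \<in> f ` M0 \<and> lmeet (f ` L) tle (f x) (f y) \<in> f ` M0"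
    if "x \<in> M0" "y \<in> M0" for x y
  proof -
    have xy: "x \<in> L" "y \<in> L" using M0 that by auto
    have "ljoin L le x y \<in> M0" "lmeet L le x y \<in> M0" using sub that unfolding zo_sublattice_def by blast+
    then show ?thesis using ljoin_image[OF subset_refl L xy] lmeet_image[OF subset_refl L xy] by simp
  qed
  have least: "A \<in> f ` M0" if A: "is_least (f ` L) tle A" for A
  proof -
    obtain a where "A = f a" "is_least L le a" using is_least_imageD[OF subset_refl A] by blast
    then show ?thesis using sub unfolding zo_sublattice_def by blast
  qed
  have greatest: "A \<in> f ` M0" if A: "is_greatest (f ` L) tle A" for A
  proof -
    obtain a where "A = f a" "is_greatest L le a" using is_greatest_imageD[OF subset_refl A] by blast
    then show ?thesis using sub unfolding zo_sublattice_def by blast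
  qed
  have "\<forall>X\<in>f ` M0. \<forall>Y\<in>f ` M0. ljoin (f ` L) tle X Y \<in> f ` M0 \<and> lmeet (f ` L) tle X Y \<in> f ` M0"
    using ops by blast
  then show ?thesis unfolding zo_sublattice_def using M0 least greatest by blast
qed

lemma order_iso_Princ_image:
  assumes M: "M \<subseteq> L" "is_lattice M le" and iso: "order_iso_Princ P leP M le \<xi>"
  shows "order_iso_Princ P leP (f ` M) tle (tmap \<circ> \<xi>)"
proof -
  have bij: "bij_betw \<xi> P (Princ M le)" and ord: "\<forall>x\<in>P. \<forall>y\<in>P. leP x y \<longleftrightarrow> \<xi> x \<subseteq> \<xi> y"
    using iso unfolding order_iso_Princ_def by auto
  have sub: "\<theta> \<subseteq> L \<times> L" if "\<theta> \<in> Princ M le" for \<theta>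
    using Princ_subset[OF M(2) that] M(1) by blast
  have "inj_on tmap (Princ M le)"
  proof (rule inj_onI)
    fix \<theta>1 \<theta>2 assume \<theta>: "\<theta>1 \<in> Princ M le" "\<theta>2 \<in> Princ M le" "tmap \<theta>1 = tmap \<theta>2"
    then show "\<theta>1 = \<theta>2"
      using tmap_subset_iff[OF sub[OF \<theta>(1)] sub[OF \<theta>(2)]] tmap_subset_iff[OF sub[OF \<theta>(2)] sub[OF \<theta>(1)]]
      by blast
  qed
  then have "bij_betw tmap (Princ M le) (Princ (f ` M) tle)"
    unfolding Princ_image[OF M] by (rule inj_on_imp_bij_betw)
  then have "bij_betw (tmap \<circ> \<xi>) P (Princ (f ` M) tle)" by (rule bij_betw_trans[OF bij])
  moreover have "leP x y \<longleftrightarrow> (tmap \<circ> \<xi>) x \<subseteq> (tmap \<circ> \<xi>) y" if "x \<in> P" "y \<in> P" for x y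
    using ord that tmap_subset_iff[OF sub sub] bij_betwE[OF bij] by simp
  ultimately show ?thesis unfolding order_iso_Princ_def by blast
qed

end

section \<open>The gadget lattice\<close>

text \<open>Besides the bounds there are three
  pairwise incomparable elements \<open>gMid 0, gMid 1, gMid 2\<close> (an \<open>M\<^sub>3\<close> making every congruence
  that identifies an element with a bound trivial) and, for each colour \<open>i\<close>, a prime interval
  \<open>gA i < gB i\<close> whose principal congruence is the one coloured \<open>i\<close>. The remaining elements are
  joins: for a directed edge \<open>(i, j)\<close> the joins \<open>gAA = a\<^sub>i \<squnion> a\<^sub>j\<close>, \<open>gBA = b\<^sub>i \<squnion> a\<^sub>j\<close>,
  \<open>gBB = b\<^sub>i \<squnion> b\<^sub>j\<close>; for a symmetric edge \<open>gSA = a\<^sub>i \<squnion> a\<^sub>j\<close> and \<open>gSB = b\<^sub>i \<squnion> b\<^sub>j\<close>;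
  and \<open>gW i\<close>, a relative complement of \<open>b\<^sub>i\<close> above \<open>a\<^sub>i\<close>.\<close>

datatype 'c gel = gBot | gTop | gMid nat | gA 'c | gB 'c | gAA 'c 'c | gBA 'c 'c | gBB 'c 'c | gSA 'c 'c | gSB 'c 'c | gW 'c

text \<open>The order is determined by which generators lie below an element:
  \<open>above_a m y\<close> means \<open>a\<^sub>m \<le> y\<close>, and similarly for \<open>b\<^sub>m\<close>, \<open>w\<^sub>m\<close> and the middle elements.\<close>

fun above_a :: "'c \<Rightarrow> 'c gel \<Rightarrow> bool" where
  "above_a m gTop = True" | "above_a m (gA i) = (m = i)" | "above_a m (gB i) = (m = i)"
| "above_a m (gAA i j) = (m = i \<or> m = j)" | "above_a m (gBA i j) = (m = i \<or> m = j)" | "above_a m (gBB i j) = (m = i \<or> m = j)"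
| "above_a m (gSA i j) = (m = i \<or> m = j)" | "above_a m (gSB i j) = (m = i \<or> m = j)" | "above_a m (gW i) = (m = i)"
| "above_a m _ = False"
fun above_b :: "'c \<Rightarrow> 'c gel \<Rightarrow> bool" where
  "above_b m gTop = True" | "above_b m (gB i) = (m = i)" | "above_b m (gBA i j) = (m = i)" | "above_b m (gBB i j) = (m = i \<or> m = j)"
| "above_b m (gSB i j) = (m = i \<or> m = j)" | "above_b m _ = False"
fun above_w :: "'c \<Rightarrow> 'c gel \<Rightarrow> bool" where
  "above_w m gTop = True" | "above_w m (gW i) = (m = i)" | "above_w m _ = False"
fun above_mid :: "nat \<Rightarrow> 'c gel \<Rightarrow> bool" where
  "above_mid k gTop = True" | "above_mid k (gMid n) = (k = n)" | "above_mid k _ = False"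

fun gle :: "'c gel \<Rightarrow> 'c gel \<Rightarrow> bool" where
  "gle gBot y = True" | "gle gTop y = (y = gTop)" | "gle (gMid n) y = above_mid n y"
| "gle (gA i) y = above_a i y" | "gle (gB i) y = above_b i y"
| "gle (gAA i j) y = (above_a i y \<and> above_a j y)" | "gle (gBA i j) y = (above_b i y \<and> above_a j y)"
| "gle (gBB i j) y = (above_b i y \<and> above_b j y)" | "gle (gSA i j) y = (above_a i y \<and> above_a j y)"
| "gle (gSB i j) y = (above_b i y \<and> above_b j y)" | "gle (gW i) y = above_w i y"

text \<open>The carrier, given by the colours \<open>I\<close>, the directed edges \<open>G\<close>, the symmetric edges \<open>Sy\<close>
  and the colours \<open>Wt\<close> whose congruence is to be the full relation.\<close>

fun gvalid :: "'c set \<Rightarrow> ('c\<times>'c) set \<Rightarrow> ('c\<times>'c) set \<Rightarrow> 'c set \<Rightarrow> 'c gel \<Rightarrow> bool" where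
  "gvalid I G Sy Wt gBot = True" | "gvalid I G Sy Wt gTop = True" | "gvalid I G Sy Wt (gMid n) = (n < 3)"
| "gvalid I G Sy Wt (gA i) = (i \<in> I)" | "gvalid I G Sy Wt (gB i) = (i \<in> I)"
| "gvalid I G Sy Wt (gAA i j) = ((i,j) \<in> G)" | "gvalid I G Sy Wt (gBA i j) = ((i,j) \<in> G)" | "gvalid I G Sy Wt (gBB i j) = ((i,j) \<in> G)"
| "gvalid I G Sy Wt (gSA i j) = ((i,j) \<in> Sy)" | "gvalid I G Sy Wt (gSB i j) = ((i,j) \<in> Sy)"
| "gvalid I G Sy Wt (gW i) = (i \<in> Wt)"

text \<open>Joins: comparable elements join to the larger one; \<open>gjoin_pair\<close> lists the joins of
  incomparable elements that are not the top (in one of the two argument orders).\<close>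

fun gjoin_pair :: "('c\<times>'c) set \<Rightarrow> ('c\<times>'c) set \<Rightarrow> 'c gel \<Rightarrow> 'c gel \<Rightarrow> 'c gel" where
  "gjoin_pair G Sy (gA i) (gA j) = (if (i,j)\<in>G then gAA i j else if (i,j)\<in>Sy then gSA i j else gTop)"
| "gjoin_pair G Sy (gA i) (gB j) = (if (j,i)\<in>G then gBA j i else if (i,j)\<in>G then gBB i j else if (i,j)\<in>Sy then gSB i j else if (j,i)\<in>Sy then gSB j i else gTop)"
| "gjoin_pair G Sy (gB i) (gB j) = (if (i,j)\<in>G then gBB i j else if (i,j)\<in>Sy then gSB i j else gTop)"
| "gjoin_pair G Sy (gB k) (gAA i j) = (if k=i then gBA i j else if k=j then gBB i j else gTop)"
| "gjoin_pair G Sy (gB k) (gBA i j) = (if k=j then gBB i j else gTop)"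
| "gjoin_pair G Sy (gB k) (gSA i j) = (if k=i \<or> k=j then gSB i j else gTop)"
| "gjoin_pair G Sy _ _ = gTop"

definition gjoin :: "('c\<times>'c) set \<Rightarrow> ('c\<times>'c) set \<Rightarrow> 'c gel \<Rightarrow> 'c gel \<Rightarrow> 'c gel" where
  "gjoin G Sy x y = (if gle x y then y else if gle y x then x else if gjoin_pair G Sy x y \<noteq> gTop then gjoin_pair G Sy x y else gjoin_pair G Sy y x)"

text \<open>Meets: an incomparable pair meets in \<open>\<bottom>\<close>, \<open>a\<^sub>m\<close> or \<open>b\<^sub>m\<close> for a colour \<open>m\<close> common to both;
  \<open>level x m\<close> records which of \<open>a\<^sub>m, b\<^sub>m\<close> lie below \<open>x\<close>.\<close>

fun fst_colour :: "'c gel \<Rightarrow> 'c" where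
  "fst_colour (gA i) = i" | "fst_colour (gB i) = i" | "fst_colour (gAA i j) = i" | "fst_colour (gBA i j) = i" | "fst_colour (gBB i j) = i"
| "fst_colour (gSA i j) = i" | "fst_colour (gSB i j) = i" | "fst_colour (gW i) = i" | "fst_colour _ = undefined"
fun snd_colour :: "'c gel \<Rightarrow> 'c" where
  "snd_colour (gA i) = i" | "snd_colour (gB i) = i" | "snd_colour (gAA i j) = j" | "snd_colour (gBA i j) = j" | "snd_colour (gBB i j) = j"
| "snd_colour (gSA i j) = j" | "snd_colour (gSB i j) = j" | "snd_colour (gW i) = i" | "snd_colour _ = undefined"

definition level :: "'c gel \<Rightarrow> 'c \<Rightarrow> nat" where
  "level x m = (if above_b m x then 2 else if above_a m x then 1 else 0)"
definition level_elt :: "'c \<Rightarrow> nat \<Rightarrow> 'c gel" where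
  "level_elt m n = (if n = 0 then gBot else if n = 1 then gA m else gB m)"

fun is_mid :: "'c gel \<Rightarrow> bool" where "is_mid (gMid n) = True" | "is_mid _ = False"

definition gmeet :: "'c gel \<Rightarrow> 'c gel \<Rightarrow> 'c gel" where
  "gmeet x y = (if gle x y then x else if gle y x then y else
     if is_mid x \<or> is_mid y then gBot else
     if above_a (fst_colour x) y then level_elt (fst_colour x) (min (level x (fst_colour x)) (level y (fst_colour x)))
     else if above_a (snd_colour x) y then level_elt (snd_colour x) (min (level x (snd_colour x)) (level y (snd_colour x))) else gBot)"

lemma gle_refl [simp]: "gle x x"
  by (cases x) auto

lemma gle_top [simp]: "gle x gTop"
  by (cases x) auto

lemma above_b_above_a: "above_b m y \<Longrightarrow> above_a m y"
  by (cases y) auto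

lemma above_w_above_a: "above_w m y \<Longrightarrow> above_a m y"
  by (cases y) auto

text \<open>\<open>gle\<close> is inclusion of the sets of generators below, hence transitive.\<close>

lemma gle_iff_generators: "gle x y \<longleftrightarrow>
    (\<forall>m. (above_a m x \<longrightarrow> above_a m y) \<and> (above_b m x \<longrightarrow> above_b m y) \<and> (above_w m x \<longrightarrow> above_w m y))
    \<and> (\<forall>k. above_mid k x \<longrightarrow> above_mid k y) \<and> (x = gTop \<longrightarrow> y = gTop)"
  by (cases x) (auto dest: above_b_above_a above_w_above_a)

lemma gle_trans: "gle x y \<Longrightarrow> gle y z \<Longrightarrow> gle x z"
  unfolding gle_iff_generators by blast

locale gadget =
  fixes I :: "'c set" and G Sy :: "('c\<times>'c) set" and Wt :: "'c set"
  assumes G_sub: "(i,j)\<in>G \<Longrightarrow> i \<in> I \<and> j \<in> I"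
    and G_irr: "(i,j)\<in>G \<Longrightarrow> i \<noteq> j"
    and G_asym: "(i,j)\<in>G \<Longrightarrow> (j,i)\<notin>G"
    and G_Sy: "(i,j)\<in>G \<Longrightarrow> (i,j)\<notin>Sy \<and> (j,i)\<notin>Sy"
    and Sy_sub: "(i,j)\<in>Sy \<Longrightarrow> i \<in> I \<and> j \<in> I"
    and Sy_irr: "(i,j)\<in>Sy \<Longrightarrow> i \<noteq> j"
    and Sy_asym: "(i,j)\<in>Sy \<Longrightarrow> (j,i)\<notin>Sy"
    and W_sub: "i \<in> Wt \<Longrightarrow> i \<in> I"
begin
abbreviation "V \<equiv> gvalid I G Sy Wt"
abbreviation "J \<equiv> gjoin G Sy"

lemma antisym: "V x \<Longrightarrow> V y \<Longrightarrow> gle x y \<Longrightarrow> gle y x \<Longrightarrow> x = y"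
  apply (cases x; cases y)
  apply (simp_all)
  apply (auto dest: G_irr G_asym G_Sy Sy_irr Sy_asym)
  done

lemma join_least: "V x \<Longrightarrow> V y \<Longrightarrow> V z \<Longrightarrow> gle x z \<Longrightarrow> gle y z \<Longrightarrow> gle (J x y) z"
  apply (cases x; cases y)
  apply (simp_all add: gjoin_def)
  apply (case_tac [!] z)
  apply (simp_all)
  apply (auto dest: G_irr G_asym G_Sy Sy_irr Sy_asym)
  done
lemma join_ub: "V x \<Longrightarrow> V y \<Longrightarrow> gle x (J x y) \<and> gle y (J x y) \<and> V (J x y)"
  apply (cases x; cases y)
  apply (simp_all add: gjoin_def)
  apply ((auto dest: G_sub Sy_sub)?)
  done

lemma meet_lb: "V x \<Longrightarrow> V y \<Longrightarrow> gle (gmeet x y) x \<and> gle (gmeet x y) y \<and> V (gmeet x y)"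
  apply (cases x; cases y)
  apply (simp_all add: gmeet_def level_def level_elt_def)
  apply ((auto dest: G_sub Sy_sub W_sub)?)
  done

lemma meet_glb: "V x \<Longrightarrow> V y \<Longrightarrow> V z \<Longrightarrow> gle z x \<Longrightarrow> gle z y \<Longrightarrow> gle z (gmeet x y)"
  apply (cases x; cases y)
  apply (simp_all add: gmeet_def level_def level_elt_def)
  apply (case_tac [!] z)
  apply (simp_all)
  apply (auto dest: G_irr G_asym G_Sy Sy_irr Sy_asym)
  done

abbreviation "C \<equiv> {x. V x}"

lemma partial_order: "partial_order_on' C gle"
  unfolding partial_order_on'_def by (auto intro: antisym gle_trans)

lemma is_lub_J: "V x \<Longrightarrow> V y \<Longrightarrow> is_lub C gle x y (J x y)"
  unfolding is_lub_def using join_ub[of x y] join_least[of x y] by auto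

lemma is_glb_gmeet: "V x \<Longrightarrow> V y \<Longrightarrow> is_glb C gle x y (gmeet x y)"
  unfolding is_glb_def using meet_lb[of x y] meet_glb[of x y] by auto

lemma ljoin_eq [simp]: "V x \<Longrightarrow> V y \<Longrightarrow> ljoin C gle x y = J x y"
  by (rule ljoin_eqI[OF partial_order is_lub_J])

lemma lmeet_eq [simp]: "V x \<Longrightarrow> V y \<Longrightarrow> lmeet C gle x y = gmeet x y"
  by (rule lmeet_eqI[OF partial_order is_glb_gmeet])

lemma is_least_iff: "is_least C gle a \<longleftrightarrow> a = gBot"
  unfolding is_least_def using antisym[of a gBot] by auto

lemma is_greatest_iff: "is_greatest C gle a \<longleftrightarrow> a = gTop"
  unfolding is_greatest_def by (auto dest: spec[of _ gTop])

lemma lattice: "is_lattice C gle"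
  unfolding is_lattice_def using partial_order is_lub_J is_glb_gmeet by blast

lemma bounded: "bounded_lattice C gle"
  unfolding bounded_lattice_def using lattice is_least_iff is_greatest_iff by blast

abbreviation "gcong \<equiv> lattice_congruence C gle"
abbreviation "gcon \<equiv> con C gle"

lemma gcong_join: "gcong \<theta> \<Longrightarrow> (a, b) \<in> \<theta> \<Longrightarrow> V c \<Longrightarrow> (J a c, J b c) \<in> \<theta>"
  using cong_join[of C gle \<theta> a b c] cong_sub[of C gle \<theta>] by (auto simp: subset_iff)

lemma gcong_meet: "gcong \<theta> \<Longrightarrow> (a, b) \<in> \<theta> \<Longrightarrow> V c \<Longrightarrow> (gmeet a c, gmeet b c) \<in> \<theta>"
  using cong_meet[of C gle \<theta> a b c] cong_sub[of C gle \<theta>] by (auto simp: subset_iff)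

lemma gcon_congruence: "V x \<Longrightarrow> V y \<Longrightarrow> gcong (gcon x y)"
  by (rule con_congruence[OF lattice]) simp_all

lemma gcon_mem: "V x \<Longrightarrow> V y \<Longrightarrow> (x, y) \<in> gcon x y"
  by (rule con_mem[OF lattice]) simp_all

lemma gcon_subI: "V x \<Longrightarrow> V y \<Longrightarrow> (u, v) \<in> gcon x y \<Longrightarrow> gcon u v \<subseteq> gcon x y"
  by (rule con_subI[OF lattice]) simp_all

end

section \<open>Principal congruences of the gadget lattice\<close>

text \<open>The colour of a prime interval: \<open>[a\<^sub>i, b\<^sub>i]\<close> and the intervals perspective to it inside the
  joins of an edge carry colour \<open>i\<close>; all other comparable pairs generate the full relation.\<close>

fun colour :: "'c gel \<Rightarrow> 'c gel \<Rightarrow> 'c option" where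
  "colour (gA i) (gB j) = (if i = j then Some i else None)"
| "colour (gAA i j) (gBA k l) = (if i = k \<and> j = l then Some i else None)"
| "colour (gBA i j) (gBB k l) = (if i = k \<and> j = l then Some j else None)"
| "colour (gAA i j) (gBB k l) = (if i = k \<and> j = l then Some j else None)"
| "colour (gSA i j) (gSB k l) = (if i = k \<and> j = l then Some i else None)"
| "colour _ _ = None"

definition other_colour :: "'c gel \<Rightarrow> 'c \<Rightarrow> 'c" where
  "other_colour y i = (if fst_colour y = i then snd_colour y else fst_colour y)"

context gadget
begin

lemma gjoin_bot_left [simp]: "J gBot x = x"
  by (simp add: gjoin_def)

lemma gmeet_top_left [simp]: "gmeet gTop x = x"
  by (cases x) (simp_all add: gmeet_def)

lemma full_if_bot_top: "gcong \<theta> \<Longrightarrow> (gBot, gTop) \<in> \<theta> \<Longrightarrow> \<theta> = C \<times> C"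
  by (rule congruence_collapsing_bounds[OF lattice]) (simp_all add: is_least_iff is_greatest_iff)

text \<open>Because of the \<open>M\<^sub>3\<close> formed by the middle elements, identifying any element with a bound
  already forces the full relation.\<close>

lemma full_if_mid_top: assumes "gcong \<theta>" "(gMid k, gTop) \<in> \<theta>" "k < 3" shows "\<theta> = C \<times> C"
proof -
  define k1 where "k1 = (k + 1) mod 3"
  define k2 where "k2 = (k + 2) mod 3"
  have k: "k1 < 3" "k2 < 3" "k1 \<noteq> k" "k2 \<noteq> k" "k1 \<noteq> k2"
    using \<open>k < 3\<close> unfolding k1_def k2_def by presburger+
  have "(gmeet (gMid k) (gMid k2), gmeet gTop (gMid k2)) \<in> \<theta>" by (rule gcong_meet[OF assms(1,2)]) (simp add: k)
  then have bot_k2: "(gBot, gMid k2) \<in> \<theta>" using k by (simp add: gmeet_def)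
  have "(gmeet (gMid k) (gMid k1), gmeet gTop (gMid k1)) \<in> \<theta>" by (rule gcong_meet[OF assms(1,2)]) (simp add: k)
  then have "(gBot, gMid k1) \<in> \<theta>" using k by (simp add: gmeet_def)
  then have "(J gBot (gMid k2), J (gMid k1) (gMid k2)) \<in> \<theta>" by (rule gcong_join[OF assms(1)]) (simp add: k)
  then have k2_top: "(gMid k2, gTop) \<in> \<theta>" using k by (simp add: gjoin_def)
  show ?thesis using full_if_bot_top[OF assms(1) cong_trans[OF assms(1) bot_k2 k2_top]] .
qed

lemma full_if_bot_collapses: assumes "gcong \<theta>" "(gBot, w) \<in> \<theta>" "V w" "w \<noteq> gBot" shows "\<theta> = C \<times> C"
proof -
  define k where "k = (if w = gMid 0 then 1 else (0::nat))"
  have k: "k < 3" "w \<noteq> gMid k" by (auto simp: k_def)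
  have "(J gBot (gMid k), J w (gMid k)) \<in> \<theta>" by (rule gcong_join[OF assms(1,2)]) (simp add: k)
  moreover have "J w (gMid k) = gTop" using k assms(3,4) by (cases w) (auto simp: gjoin_def)
  ultimately show ?thesis using full_if_mid_top[OF assms(1) _ k(1)] by simp
qed

lemma full_if_top_collapses: assumes "gcong \<theta>" "(w, gTop) \<in> \<theta>" "V w" "w \<noteq> gTop" shows "\<theta> = C \<times> C"
proof -
  define k where "k = (if w = gMid 0 then 1 else (0::nat))"
  have k: "k < 3" "w \<noteq> gMid k" by (auto simp: k_def)
  have "(gmeet w (gMid k), gmeet gTop (gMid k)) \<in> \<theta>" by (rule gcong_meet[OF assms(1,2)]) (simp add: k)
  moreover have "gmeet w (gMid k) = gBot" using k assms(3,4) by (cases w) (auto simp: gmeet_def)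
  ultimately show ?thesis using full_if_bot_collapses[OF assms(1), of "gMid k"] k by simp
qed

lemma gcon_refl: "V x \<Longrightarrow> gcon x x = Id_on C"
  by (rule con_refl_Id[OF lattice]) simp

lemma gcon_meet_join: "V x \<Longrightarrow> V y \<Longrightarrow> gcon x y = gcon (gmeet x y) (J x y)"
  using con_meet_join[OF lattice, of x y] by simp

lemma gcon_perspective:
  assumes "V x" "V y" "V c" "V d" "gmeet x c = u" "gmeet y c = v" "J u d = x" "J v d = y"
  shows "gcon x y = gcon u v"
  using assms meet_lb by (intro con_perspective[OF lattice, of x y c d]) auto

lemma gcon_AA_BA: "(i,j) \<in> G \<Longrightarrow> gcon (gAA i j) (gBA i j) = gcon (gA i) (gB i)"
  by (rule gcon_perspective[where c="gB i" and d="gAA i j"]) (auto simp: gmeet_def gjoin_def level_def level_elt_def dest: G_sub G_irr)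
lemma gcon_BA_BB: "(i,j) \<in> G \<Longrightarrow> gcon (gBA i j) (gBB i j) = gcon (gA j) (gB j)"
  by (rule gcon_perspective[where c="gB j" and d="gBA i j"]) (auto simp: gmeet_def gjoin_def level_def level_elt_def dest: G_sub G_irr)
lemma gcon_AA_BB: "(i,j) \<in> G \<Longrightarrow> gcon (gAA i j) (gBB i j) = gcon (gA j) (gB j)"
  by (rule gcon_perspective[where c="gB j" and d="gAA i j"]) (auto simp: gmeet_def gjoin_def level_def level_elt_def dest: G_sub G_irr)
lemma gcon_SA_SB_fst: "(i,j) \<in> Sy \<Longrightarrow> gcon (gSA i j) (gSB i j) = gcon (gA i) (gB i)"
  by (rule gcon_perspective[where c="gB i" and d="gSA i j"]) (auto simp: gmeet_def gjoin_def level_def level_elt_def dest: Sy_sub Sy_irr)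
lemma gcon_SA_SB_snd: "(i,j) \<in> Sy \<Longrightarrow> gcon (gSA i j) (gSB i j) = gcon (gA j) (gB j)"
  by (rule gcon_perspective[where c="gB j" and d="gSA i j"]) (auto simp: gmeet_def gjoin_def level_def level_elt_def dest: Sy_sub Sy_irr)

text \<open>The three purposes of the edges: a directed edge \<open>(i, j)\<close> forces colour \<open>i\<close> below colour
  \<open>j\<close> (as \<open>gAA < gBA < gBB\<close>), a symmetric edge identifies the two colours, and a witness
  \<open>gW i\<close> makes colour \<open>i\<close> the full relation.\<close>

lemma gcon_edge_mono: assumes "(i,j) \<in> G" shows "gcon (gA i) (gB i) \<subseteq> gcon (gA j) (gB j)"
proof -
  have v: "V (gAA i j)" "V (gBA i j)" "V (gBB i j)" using assms by auto
  have "(gmeet (gAA i j) (gBA i j), gmeet (gBB i j) (gBA i j)) \<in> gcon (gAA i j) (gBB i j)"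
    by (rule gcong_meet[OF gcon_congruence gcon_mem]) (use v in auto)
  then have "(gAA i j, gBA i j) \<in> gcon (gAA i j) (gBB i j)"
    using G_irr[OF assms] by (simp add: gmeet_def level_def level_elt_def)
  then have "gcon (gAA i j) (gBA i j) \<subseteq> gcon (gAA i j) (gBB i j)" by (rule gcon_subI[OF v(1,3)])
  then show ?thesis using gcon_AA_BA[OF assms] gcon_AA_BB[OF assms] by simp
qed

lemma gcon_sym_edge_eq: "(i,j) \<in> Sy \<Longrightarrow> gcon (gA i) (gB i) = gcon (gA j) (gB j)"
  using gcon_SA_SB_fst gcon_SA_SB_snd by metis

lemma gcon_witness_full: assumes "i \<in> Wt" shows "gcon (gA i) (gB i) = C \<times> C"
proof -
  have v: "V (gA i)" "V (gB i)" "V (gW i)" using assms W_sub by auto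
  have "(J (gA i) (gW i), J (gB i) (gW i)) \<in> gcon (gA i) (gB i)"
    by (rule gcong_join[OF gcon_congruence gcon_mem]) (use v in auto)
  then have "(gW i, gTop) \<in> gcon (gA i) (gB i)" by (simp add: gjoin_def)
  then show ?thesis by (rule full_if_top_collapses[OF gcon_congruence[OF v(1,2)]]) (use v in auto)
qed

lemma gcon_coloured: assumes "V x" "V y" "colour x y = Some i"
  shows "i \<in> I \<and> gcon x y = gcon (gA i) (gB i)"
  using assms
  apply (cases x; cases y)
  apply (simp_all split: if_splits)
  apply (auto simp: gcon_AA_BA gcon_BA_BB gcon_AA_BB gcon_SA_SB_fst dest: G_sub Sy_sub)
  done

text \<open>An uncoloured proper interval strictly inside \<open>[\<bottom>, \<top>]\<close> is separated by some \<open>b\<^sub>m\<close>: meeting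
  with it sends only the lower end to \<open>\<bottom>\<close>, or joining with it sends only the upper end to \<open>\<top>\<close>.\<close>

lemma uncoloured_separator:
  assumes "V x" "V y" "gle x y" "x \<noteq> y" "colour x y = None" "x \<noteq> gBot" "y \<noteq> gTop"
  shows "\<exists>c. V c \<and> (gmeet x c = gBot \<and> gmeet y c \<noteq> gBot \<or> J x c \<noteq> gTop \<and> J y c = gTop)"
proof -
  define c1 c2 where "c1 = gB (other_colour y (fst_colour x))" and "c2 = gB (fst_colour x)"
  have "V c1 \<and> gmeet x c1 = gBot \<and> gmeet y c1 \<noteq> gBot \<or> V c2 \<and> J x c2 \<noteq> gTop \<and> J y c2 = gTop"
    unfolding c1_def c2_def
    using assms
    apply (cases x; cases y)
    apply (simp_all add: other_colour_def)
    apply (auto simp: gmeet_def gjoin_def level_def level_elt_def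
        dest: G_sub G_irr G_asym Sy_sub Sy_irr W_sub G_Sy Sy_asym)
    done
  then show ?thesis by blast
qed

lemma gcon_uncoloured:
  assumes "V x" "V y" "gle x y" "x \<noteq> y" "colour x y = None"
  shows "gcon x y = C \<times> C"
proof -
  note \<theta> = gcon_congruence[OF assms(1,2)] and xy = gcon_mem[OF assms(1,2)]
  consider "x = gBot" | "y = gTop" | "x \<noteq> gBot" "y \<noteq> gTop" by blast
  then show ?thesis
  proof cases
    case 1 then show ?thesis using full_if_bot_collapses[OF \<theta>] xy assms by auto
  next
    case 2 then show ?thesis using full_if_top_collapses[OF \<theta>] xy assms by auto
  next
    case 3
    then obtain c where c: "V c" "gmeet x c = gBot \<and> gmeet y c \<noteq> gBot \<or> J x c \<noteq> gTop \<and> J y c = gTop"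
      using uncoloured_separator[OF assms] by blast
    have "(gmeet x c, gmeet y c) \<in> gcon x y" "(J x c, J y c) \<in> gcon x y"
      using gcong_meet[OF \<theta> xy c(1)] gcong_join[OF \<theta> xy c(1)] by auto
    then show ?thesis
      using c full_if_bot_collapses[OF \<theta>] full_if_top_collapses[OF \<theta>] meet_lb join_ub assms(1,2) by metis
  qed
qed

lemma gcon_classify:
  assumes "V x" "V y" "x \<noteq> y"
  shows "(case colour (gmeet x y) (J x y) of
      None \<Rightarrow> gcon x y = C \<times> C
    | Some i \<Rightarrow> i \<in> I \<and> gcon x y = gcon (gA i) (gB i))"
proof -
  have m: "V (gmeet x y)" "gle (gmeet x y) x" "gle (gmeet x y) y" using meet_lb assms by auto
  have j: "V (J x y)" "gle x (J x y)" "gle y (J x y)" using join_ub assms by auto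
  have ne: "gmeet x y \<noteq> J x y"
  proof
    assume "gmeet x y = J x y"
    then have "gle x y" "gle y x" using m j gle_trans by metis+
    then show False using antisym assms by blast
  qed
  have le: "gle (gmeet x y) (J x y)" using m j gle_trans by blast
  show ?thesis
  proof (cases "colour (gmeet x y) (J x y)")
    case None then show ?thesis
      using gcon_uncoloured[OF m(1) j(1) le ne None] gcon_meet_join[OF assms(1,2)] by simp
  next
    case (Some i) then show ?thesis
      using gcon_coloured[OF m(1) j(1) Some] gcon_meet_join[OF assms(1,2)] by simp
  qed
qed

lemma Princ_gadget: "Princ C gle = {Id_on C, C \<times> C} \<union> {gcon (gA i) (gB i) | i. i \<in> I}"
proof (intro equalityI subsetI)
  fix \<theta> assume "\<theta> \<in> Princ C gle"
  then obtain x y where xy: "V x" "V y" "\<theta> = gcon x y" unfolding Princ_def by blast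
  show "\<theta> \<in> {Id_on C, C \<times> C} \<union> {gcon (gA i) (gB i) | i. i \<in> I}"
  proof (cases "x = y")
    case True then show ?thesis using gcon_refl xy by simp
  next
    case False then show ?thesis
      using gcon_classify[OF xy(1,2) False] xy(3) by (auto split: option.splits)
  qed
next
  fix \<theta> assume "\<theta> \<in> {Id_on C, C \<times> C} \<union> {gcon (gA i) (gB i) | i. i \<in> I}"
  moreover have "Id_on C = gcon gBot gBot" "C \<times> C = gcon gBot gTop"
    using gcon_refl full_if_bot_top[OF gcon_congruence gcon_mem] by simp_all
  ultimately show "\<theta> \<in> Princ C gle" unfolding Princ_def by fastforce
qed

end

section \<open>Separating congruences of the gadget lattice\<close>

text \<open>These congruences separate colours, so colour congruences are not comparable
  unless forced by the edges.\<close>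

fun collapse :: "'c set \<Rightarrow> 'c gel \<Rightarrow> 'c gel" where
  "collapse K (gB i) = (if i \<in> K then gA i else gB i)"
| "collapse K (gBA i j) = (if i \<in> K then gAA i j else gBA i j)"
| "collapse K (gBB i j) = (if i \<in> K \<and> j \<in> K then gAA i j else gBB i j)"
| "collapse K (gSB i j) = (if i \<in> K \<and> j \<in> K then gSA i j else gSB i j)"
| "collapse K x = x"

context gadget
begin

definition admissible :: "'c set \<Rightarrow> bool" where
  "admissible K \<longleftrightarrow> (\<forall>i j. (i,j) \<in> G \<longrightarrow> j \<in> K \<longrightarrow> i \<in> K) \<and> (\<forall>i j. (i,j) \<in> Sy \<longrightarrow> (i \<in> K \<longleftrightarrow> j \<in> K))
     \<and> (\<forall>i\<in>Wt. i \<notin> K)"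

definition collapse_cong :: "'c set \<Rightarrow> ('c gel \<times> 'c gel) set" where
  "collapse_cong K = {(x,y). V x \<and> V y \<and> collapse K x = collapse K y}"

lemma gjoin_commute: "V x \<Longrightarrow> V y \<Longrightarrow> J x y = J y x"
  using ljoin_commute[OF lattice, of x y] by simp

lemma gmeet_commute: "V x \<Longrightarrow> V y \<Longrightarrow> gmeet x y = gmeet y x"
  using lmeet_commute[OF lattice, of x y] by simp

lemma admissible_edge: "admissible K \<Longrightarrow> (i,j) \<in> G \<Longrightarrow> j \<in> K \<Longrightarrow> i \<in> K"
  unfolding admissible_def by blast
lemma admissible_sym_edge1: "admissible K \<Longrightarrow> (i,j) \<in> Sy \<Longrightarrow> i \<in> K \<Longrightarrow> j \<in> K"
  unfolding admissible_def by blast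
lemma admissible_sym_edge2: "admissible K \<Longrightarrow> (i,j) \<in> Sy \<Longrightarrow> j \<in> K \<Longrightarrow> i \<in> K"
  unfolding admissible_def by blast
lemma admissible_witness: "admissible K \<Longrightarrow> i \<in> Wt \<Longrightarrow> i \<in> K \<Longrightarrow> False"
  unfolding admissible_def by blast

lemma collapse_gjoin: "admissible K \<Longrightarrow> V x \<Longrightarrow> V c \<Longrightarrow> collapse K (J x c) = collapse K (J (collapse K x) c)"
  apply (cases x; cases c)
  apply (simp_all add: gjoin_def)
  apply (auto dest: G_irr G_asym Sy_irr G_Sy Sy_asym admissible_edge admissible_sym_edge1
      admissible_sym_edge2 admissible_witness)
  done

lemma collapse_gmeet: "admissible K \<Longrightarrow> V x \<Longrightarrow> V c \<Longrightarrow> collapse K (gmeet x c) = collapse K (gmeet (collapse K x) c)"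
  apply (cases x; cases c)
  apply (simp_all add: gmeet_def level_def level_elt_def)
  apply (auto dest: G_irr G_asym Sy_irr G_Sy Sy_asym admissible_edge admissible_sym_edge1
      admissible_sym_edge2 admissible_witness)
  done

lemma collapse_cong_congruence: assumes K: "admissible K" shows "gcong (collapse_cong K)"
  unfolding lattice_congruence_def
proof (intro conjI allI impI)
  show "equiv C (collapse_cong K)"
    by (rule equivI) (auto simp: collapse_cong_def refl_on_def sym_def trans_def)
  fix a b c d assume "(a, b) \<in> collapse_cong K \<and> (c, d) \<in> collapse_cong K"
  then have h: "V a" "V b" "V c" "V d" "collapse K a = collapse K b" "collapse K c = collapse K d"
    by (auto simp: collapse_cong_def)
  have "collapse K (J a c) = collapse K (J (collapse K a) c)" using collapse_gjoin[OF K h(1,3)] .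
  also have "\<dots> = collapse K (J c b)" using collapse_gjoin[OF K h(2,3)] h gjoin_commute by simp
  also have "\<dots> = collapse K (J (collapse K c) b)" using collapse_gjoin[OF K h(3,2)] .
  also have "\<dots> = collapse K (J b d)" using collapse_gjoin[OF K h(4,2)] h gjoin_commute by simp
  finally show "(ljoin C gle a c, ljoin C gle b d) \<in> collapse_cong K"
    using h join_ub by (simp add: collapse_cong_def)
  have "collapse K (gmeet a c) = collapse K (gmeet (collapse K a) c)" using collapse_gmeet[OF K h(1,3)] .
  also have "\<dots> = collapse K (gmeet c b)" using collapse_gmeet[OF K h(2,3)] h gmeet_commute by simp
  also have "\<dots> = collapse K (gmeet (collapse K c) b)" using collapse_gmeet[OF K h(3,2)] .
  also have "\<dots> = collapse K (gmeet b d)" using collapse_gmeet[OF K h(4,2)] h gmeet_commute by simp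
  finally show "(lmeet C gle a c, lmeet C gle b d) \<in> collapse_cong K"
    using h meet_lb by (simp add: collapse_cong_def)
qed

lemma gcon_colour_in_collapse_cong:
  "admissible K \<Longrightarrow> i \<in> K \<Longrightarrow> i \<in> I \<Longrightarrow> gcon (gA i) (gB i) \<subseteq> collapse_cong K"
  by (rule con_least[OF collapse_cong_congruence]) (simp_all add: collapse_cong_def)

lemma colour_below_admissible:
  assumes "admissible K" "i \<in> K" "i \<in> I" "j \<in> I" "(gA j, gB j) \<in> gcon (gA i) (gB i)"
  shows "j \<in> K"
proof -
  have "(gA j, gB j) \<in> collapse_cong K" using gcon_colour_in_collapse_cong[OF assms(1-3)] assms(5) by blast
  then show ?thesis by (simp add: collapse_cong_def split: if_splits)
qed

lemma colour_not_full:
  assumes "admissible K" "i \<in> K" "i \<in> I"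
  shows "gcon (gA i) (gB i) \<noteq> C \<times> C"
proof
  assume "gcon (gA i) (gB i) = C \<times> C"
  then have "(gBot, gTop) \<in> collapse_cong K" using gcon_colour_in_collapse_cong[OF assms] by auto
  then show False by (simp add: collapse_cong_def)
qed

lemma colour_not_Id: "i \<in> I \<Longrightarrow> gcon (gA i) (gB i) \<noteq> Id_on C"
  using gcon_mem[of "gA i" "gB i"] by auto

end

text \<open>Enlarging the colour data keeps the carrier, and keeps the joins of old elements as long as
  no new edges are added between old colours; meets do not depend on the data at all. This
  makes a gadget a \{0,1\}-sublattice of any gadget over larger data.\<close>

lemma gjoin_restrict:
  assumes "gvalid I0 G0 Sy0 Wt0 x" "gvalid I0 G0 Sy0 Wt0 y"
    and "\<And>i j. (i,j) \<in> G0 \<Longrightarrow> i \<in> I0 \<and> j \<in> I0" "\<And>i j. (i,j) \<in> Sy0 \<Longrightarrow> i \<in> I0 \<and> j \<in> I0"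
    and "\<And>i. i \<in> Wt0 \<Longrightarrow> i \<in> I0"
    and "\<And>i j. i \<in> I0 \<Longrightarrow> j \<in> I0 \<Longrightarrow> (i,j) \<in> G1 \<longleftrightarrow> (i,j) \<in> G0"
    and "\<And>i j. i \<in> I0 \<Longrightarrow> j \<in> I0 \<Longrightarrow> (i,j) \<in> Sy1 \<longleftrightarrow> (i,j) \<in> Sy0"
  shows "gjoin G1 Sy1 x y = gjoin G0 Sy0 x y"
  using assms(1,2)
  apply (cases x; cases y)
  apply (simp_all add: gjoin_def)
  apply (auto simp: assms(6,7) dest: assms(3,4,5))
  done

lemma gvalid_mono: "gvalid I0 G0 Sy0 Wt0 x \<Longrightarrow> I0 \<subseteq> I1 \<Longrightarrow> G0 \<subseteq> G1 \<Longrightarrow> Sy0 \<subseteq> Sy1 \<Longrightarrow> Wt0 \<subseteq> Wt1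
    \<Longrightarrow> gvalid I1 G1 Sy1 Wt1 x"
  by (cases x) auto

text \<open>The theorem asks for lattices of sets over \<open>'a + 'b + nat\<close>. A gadget element is encoded by
  the set of its colours (through an injection \<open>c\<close>) together with a tag (through \<open>t\<close>)
  recording its kind.\<close>

fun encg :: "('c \<Rightarrow> 'd) \<Rightarrow> (nat \<Rightarrow> 'd) \<Rightarrow> 'c gel \<Rightarrow> 'd set" where
  "encg c t gBot = {t 0}" | "encg c t gTop = {t 1}" | "encg c t (gMid n) = {t (n + 20)}"
| "encg c t (gA i) = {c i, t 3}" | "encg c t (gB i) = {c i, t 4}"
| "encg c t (gAA i j) = {c i, c j, t 5}" | "encg c t (gBA i j) = {c i, c j, t 6}" | "encg c t (gBB i j) = {c i, c j, t 7}"
| "encg c t (gSA i j) = {c i, c j, t 8}" | "encg c t (gSB i j) = {c i, c j, t 9}" | "encg c t (gW i) = {c i, t 10}"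

fun kind :: "'c gel \<Rightarrow> nat" where
  "kind gBot = 0" | "kind gTop = 1" | "kind (gMid n) = n + 20" | "kind (gA i) = 3" | "kind (gB i) = 4"
| "kind (gAA i j) = 5" | "kind (gBA i j) = 6" | "kind (gBB i j) = 7" | "kind (gSA i j) = 8" | "kind (gSB i j) = 9"
| "kind (gW i) = 10"

fun hasi :: "'c gel \<Rightarrow> bool" where
  "hasi gBot = False" | "hasi gTop = False" | "hasi (gMid n) = False" | "hasi _ = True"

context gadget
begin

lemma encode_inj:
  fixes c :: "'c \<Rightarrow> 'd" and t :: "nat \<Rightarrow> 'd"
  assumes ci: "\<And>i j. c i = c j \<longleftrightarrow> i = j" and ti: "\<And>n m. t n = t m \<longleftrightarrow> n = m" and ct: "\<And>i n. c i \<noteq> t n"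
    and "V x" "V y" "encg c t x = encg c t y" shows "x = y"
proof -
  have tag_mem: "\<And>n z. t n \<in> encg c t z \<longleftrightarrow> n = kind z"
    subgoal for n z by (cases z) (auto simp: ti ct[symmetric])
    done
  have fst_mem: "\<And>z. hasi z \<Longrightarrow> c (fst_colour z) \<in> encg c t z" subgoal for z by (cases z) auto done
  have snd_mem: "\<And>z. hasi z \<Longrightarrow> c (snd_colour z) \<in> encg c t z" subgoal for z by (cases z) auto done
  have k: "kind x = kind y" using tag_mem[of "kind x" x] tag_mem[of "kind x" y] assms(6) by simp
  have h: "hasi x \<Longrightarrow> c (fst_colour x) \<in> encg c t y" "hasi x \<Longrightarrow> c (snd_colour x) \<in> encg c t y"
     "hasi y \<Longrightarrow> c (fst_colour y) \<in> encg c t x" "hasi y \<Longrightarrow> c (snd_colour y) \<in> encg c t x"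
    using fst_mem snd_mem assms(6) by metis+
  show ?thesis using assms(4,5) k h
    apply (cases x; cases y)
    apply (simp_all add: ci ct)
    apply (auto dest: G_irr G_asym Sy_irr Sy_asym)
    done
qed

end

definition colour_code :: "'a + 'b \<Rightarrow> 'a + 'b + nat" where
  "colour_code x = (case x of Inl a \<Rightarrow> Inl a | Inr b \<Rightarrow> Inr (Inl b))"

definition tag_code :: "nat \<Rightarrow> 'a + 'b + nat" where
  "tag_code n = Inr (Inr n)"

lemma colour_code_inj [simp]: "colour_code i = colour_code j \<longleftrightarrow> i = j"
  by (cases i; cases j; simp add: colour_code_def)
lemma tag_code_inj [simp]: "tag_code n = tag_code m \<longleftrightarrow> n = m"
  by (simp add: tag_code_def)
lemma colour_code_neq_tag_code [simp]: "colour_code i \<noteq> tag_code n" "tag_code n \<noteq> colour_code i"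
  by (cases i; simp add: colour_code_def tag_code_def)+

abbreviation encode :: "('a + 'b) gel \<Rightarrow> ('a + 'b + nat) set" where
  "encode \<equiv> encg colour_code tag_code"

lemma (in gadget) order_iso_Princ_gadget:
  assumes po: "partial_order_on' P le" and bot: "is_least P le b" and top: "is_greatest P le t"
    and \<xi>_bot: "\<xi> b = Id_on C" and \<xi>_top: "\<xi> t = C \<times> C"
    and inner: "\<And>p. p \<in> P - {b, t} \<Longrightarrow> \<exists>i\<in>I. \<xi> p = gcon (gA i) (gB i) \<and> \<xi> p \<noteq> C \<times> C"
    and inner_ord: "\<And>p q. p \<in> P - {b, t} \<Longrightarrow> q \<in> P - {b, t} \<Longrightarrow> le p q \<longleftrightarrow> \<xi> p \<subseteq> \<xi> q"
    and cover: "\<And>i. i \<in> I \<Longrightarrow> gcon (gA i) (gB i) \<in> \<xi> ` P"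
  shows "order_iso_Princ P le C gle \<xi>"
proof (rule order_iso_PrincI[OF po])
  have bt: "b \<in> P" "t \<in> P" using bot top unfolding is_least_def is_greatest_def by auto
  show onto: "\<xi> ` P = Princ C gle"
  proof
    show "\<xi> ` P \<subseteq> Princ C gle"
    proof (rule image_subsetI)
      fix p assume "p \<in> P"
      then consider "p = b" | "p = t" | "p \<in> P - {b, t}" by blast
      then show "\<xi> p \<in> Princ C gle"
      proof cases
        case 3
        then obtain i where "i \<in> I" "\<xi> p = gcon (gA i) (gB i)" using inner[OF 3] by blast
        then show ?thesis unfolding Princ_gadget by blast
      qed (simp_all add: Princ_gadget \<xi>_bot \<xi>_top)
    qed
    show "Princ C gle \<subseteq> \<xi> ` P"
    proof
      fix \<theta> assume "\<theta> \<in> Princ C gle"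
      then consider "\<theta> = \<xi> b" | "\<theta> = \<xi> t" | i where "i \<in> I" "\<theta> = gcon (gA i) (gB i)"
        unfolding Princ_gadget \<xi>_bot \<xi>_top by blast
      then show "\<theta> \<in> \<xi> ` P"
      proof cases
        case 3 then show ?thesis using cover by simp
      qed (use bt in simp_all)
    qed
  qed
  have between: "\<xi> b \<subseteq> \<xi> p \<and> \<xi> p \<subseteq> \<xi> t" if "p \<in> P" for p
  proof -
    have "\<xi> p \<in> Princ C gle" using imageI[OF that, of \<xi>] by (simp only: onto)
    then obtain x y where "V x" "V y" "\<xi> p = gcon x y" unfolding Princ_def by blast
    then have \<theta>: "gcong (\<xi> p)" using gcon_congruence by simp
    have "Id_on C \<subseteq> \<xi> p" using cong_refl[OF \<theta>] by auto
    then show ?thesis using cong_sub[OF \<theta>] by (simp add: \<xi>_bot \<xi>_top)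
  qed
  have "(gBot, gTop) \<in> \<xi> t" "(gBot, gTop) \<notin> \<xi> b" by (auto simp: \<xi>_bot \<xi>_top)
  then have ends: "\<not> \<xi> t \<subseteq> \<xi> b" by blast
  have inner_strict: "\<not> \<xi> p \<subseteq> \<xi> b \<and> \<not> \<xi> t \<subseteq> \<xi> p" if p: "p \<in> P - {b, t}" for p
  proof -
    obtain i where i: "i \<in> I" "\<xi> p = gcon (gA i) (gB i)" "\<xi> p \<noteq> C \<times> C" using inner[OF p] by blast
    have "\<xi> b \<subseteq> \<xi> p" "\<xi> p \<subseteq> \<xi> t" using between p by auto
    moreover have "\<xi> p \<noteq> \<xi> b" "\<xi> p \<noteq> \<xi> t" using i colour_not_Id[OF i(1)] by (simp_all add: \<xi>_bot \<xi>_top)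
    ultimately show ?thesis by (metis subset_antisym)
  qed
  show "le p q \<longleftrightarrow> \<xi> p \<subseteq> \<xi> q" if "p \<in> P" "q \<in> P" for p q
    by (rule bounded_order_embedding[where \<xi> = \<xi>, OF po bot top between ends inner_strict inner_ord that])
qed

section \<open>The construction for a monotone map\<close>

text \<open>The inner elements of \<open>P\<^sub>0\<close> and \<open>P\<^sub>1\<close> become
  colours (tagged \<open>Inl\<close> and \<open>Inr\<close>), strict comparabilities become directed edges. The small
  gadget \<open>L\<^sub>0\<close> uses only the colours of \<open>P\<^sub>0\<close>; the big gadget \<open>L\<^sub>1\<close> adds the colours of \<open>P\<^sub>1\<close>, a
  symmetric edge from \<open>p\<close> to \<open>\<psi> p\<close> whenever \<open>\<psi> p\<close> is inner, and a witness for \<open>p\<close> whenever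
  \<open>\<psi> p = 1\<close>. Then \<open>L\<^sub>0\<close> is a \{0,1\}-sublattice of \<open>L\<^sub>1\<close> and the colour \<open>p\<close> of \<open>L\<^sub>0\<close> generates in \<open>L\<^sub>1\<close>
  the congruence of \<open>\<psi> p\<close>; this is where 0-separation is needed (no inner \<open>p\<close> has \<open>\<psi> p = 0\<close>).\<close>

locale monotone_map_data =
  fixes P0 :: "'a set" and le0 :: "'a \<Rightarrow> 'a \<Rightarrow> bool"
    and P1 :: "'b set" and le1 :: "'b \<Rightarrow> 'b \<Rightarrow> bool"
    and \<psi> :: "'a \<Rightarrow> 'b"
    and bot0 top0 :: 'a and bot1 top1 :: 'b
  assumes bos0: "bounded_ordered_set P0 le0"
    and bos1: "bounded_ordered_set P1 le1"
    and lst0: "is_least P0 le0 bot0" and gr0: "is_greatest P0 le0 top0"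
    and lst1: "is_least P1 le1 bot1" and gr1: "is_greatest P1 le1 top1"
    and psiP: "\<forall>x\<in>P0. \<psi> x \<in> P1"
    and psib: "\<psi> bot0 = bot1" and psit: "\<psi> top0 = top1"
    and mono: "\<forall>x\<in>P0. \<forall>y\<in>P0. le0 x y \<longrightarrow> le1 (\<psi> x) (\<psi> y)"
    and sep: "\<forall>x\<in>P0. \<psi> x = bot1 \<longrightarrow> x = bot0"
    and nd: "bot0 \<noteq> top0"
begin

lemma po0: "partial_order_on' P0 le0" and po1: "partial_order_on' P1 le1"
  using bos0 bos1 unfolding bounded_ordered_set_def by auto

lemma refl0: "x \<in> P0 \<Longrightarrow> le0 x x" using po0 unfolding partial_order_on'_def by blast
lemma antisym0: "x \<in> P0 \<Longrightarrow> y \<in> P0 \<Longrightarrow> le0 x y \<Longrightarrow> le0 y x \<Longrightarrow> x = y"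
  using po0 unfolding partial_order_on'_def by blast
lemma trans0: "x \<in> P0 \<Longrightarrow> y \<in> P0 \<Longrightarrow> z \<in> P0 \<Longrightarrow> le0 x y \<Longrightarrow> le0 y z \<Longrightarrow> le0 x z"
  using po0 unfolding partial_order_on'_def by blast
lemma refl1: "x \<in> P1 \<Longrightarrow> le1 x x" using po1 unfolding partial_order_on'_def by blast
lemma antisym1: "x \<in> P1 \<Longrightarrow> y \<in> P1 \<Longrightarrow> le1 x y \<Longrightarrow> le1 y x \<Longrightarrow> x = y"
  using po1 unfolding partial_order_on'_def by blast
lemma trans1: "x \<in> P1 \<Longrightarrow> y \<in> P1 \<Longrightarrow> z \<in> P1 \<Longrightarrow> le1 x y \<Longrightarrow> le1 y z \<Longrightarrow> le1 x z"
  using po1 unfolding partial_order_on'_def by blast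

lemma bot0P: "bot0 \<in> P0" and top0P: "top0 \<in> P0" and top1P: "top1 \<in> P1"
  using lst0 gr0 lst1 gr1 unfolding is_least_def is_greatest_def by auto

lemma top1le: "x \<in> P1 \<Longrightarrow> le1 x top1"
  using gr1 unfolding is_greatest_def by auto

lemma nd1: "bot1 \<noteq> top1"
  using sep psit nd top0P by auto

definition Q0 :: "'a set" where "Q0 = P0 - {bot0, top0}"
definition Q1 :: "'b set" where "Q1 = P1 - {bot1, top1}"

lemma Q0P: "p \<in> Q0 \<Longrightarrow> p \<in> P0" and Q1P: "r \<in> Q1 \<Longrightarrow> r \<in> P1"
  by (auto simp: Q0_def Q1_def)

lemma psi_inner: "p \<in> Q0 \<Longrightarrow> \<psi> p \<in> Q1 \<or> \<psi> p = top1"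
  using psiP sep unfolding Q0_def Q1_def by auto

definition I0 :: "('a + 'b) set" where "I0 = Inl ` Q0"
definition G0 :: "(('a + 'b) \<times> ('a + 'b)) set" where
  "G0 = {(Inl p, Inl q) | p q. p \<in> Q0 \<and> q \<in> Q0 \<and> le0 p q \<and> p \<noteq> q}"
definition I1 :: "('a + 'b) set" where "I1 = Inl ` Q0 \<union> Inr ` Q1"
definition G1 :: "(('a + 'b) \<times> ('a + 'b)) set" where
  "G1 = G0 \<union> {(Inr p, Inr q) | p q. p \<in> Q1 \<and> q \<in> Q1 \<and> le1 p q \<and> p \<noteq> q}"
definition Sy1 :: "(('a + 'b) \<times> ('a + 'b)) set" where
  "Sy1 = {(Inl p, Inr (\<psi> p)) | p. p \<in> Q0 \<and> \<psi> p \<in> Q1}"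
definition Wt1 :: "('a + 'b) set" where
  "Wt1 = {Inl p | p. p \<in> Q0 \<and> \<psi> p = top1}"

lemma gadget0: "gadget I0 G0 {} {}"
  unfolding gadget_def I0_def G0_def Q0_def using antisym0 by blast

lemma gadget1: "gadget I1 G1 Sy1 Wt1"
  unfolding gadget_def I1_def G1_def G0_def Sy1_def Wt1_def Q0_def Q1_def using antisym0 antisym1 by blast

end

context monotone_map_data
begin

sublocale A0: gadget I0 G0 "{}" "{}" by (rule gadget0)
sublocale A1: gadget I1 G1 Sy1 Wt1 by (rule gadget1)

lemma C01: "A0.C \<subseteq> A1.C"
  by (auto intro: gvalid_mono simp: I0_def I1_def G1_def)

lemma gjoin01: "gvalid I0 G0 {} {} x \<Longrightarrow> gvalid I0 G0 {} {} y \<Longrightarrow> gjoin G1 Sy1 x y = gjoin G0 {} x y"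
proof (rule gjoin_restrict[of I0 G0 "{}" "{}" x y G1 Sy1])
  fix i j assume "i \<in> I0" "j \<in> I0"
  then show "(i, j) \<in> G1 \<longleftrightarrow> (i, j) \<in> G0" "(i, j) \<in> Sy1 \<longleftrightarrow> (i, j) \<in> {}"
    by (auto simp: I0_def G0_def G1_def Sy1_def)
qed (auto dest: A0.G_sub)

lemma zo_sublattice01: "zo_sublattice A0.C A1.C gle"
  unfolding zo_sublattice_def
proof (intro conjI ballI allI impI)
  fix x y assume xy: "x \<in> A0.C" "y \<in> A0.C"
  then have "x \<in> A1.C" "y \<in> A1.C" using C01 by auto
  then have "ljoin A1.C gle x y = gjoin G0 {} x y" "lmeet A1.C gle x y = gmeet x y"
    using gjoin01 xy by simp_all
  then show "ljoin A1.C gle x y \<in> A0.C" "lmeet A1.C gle x y \<in> A0.C"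
    using A0.join_ub A0.meet_lb xy by simp_all
qed (use C01 A1.is_least_iff A1.is_greatest_iff in auto)

definition xi0 :: "'a \<Rightarrow> (('a + 'b) gel \<times> ('a + 'b) gel) set" where
  "xi0 p = (if p = bot0 then Id_on A0.C else if p = top0 then A0.C \<times> A0.C
     else A0.gcon (gA (Inl p)) (gB (Inl p)))"

definition xi1 :: "'b \<Rightarrow> (('a + 'b) gel \<times> ('a + 'b) gel) set" where
  "xi1 r = (if r = bot1 then Id_on A1.C else if r = top1 then A1.C \<times> A1.C
     else A1.gcon (gA (Inr r)) (gB (Inr r)))"

lemma xi0_inner: "p \<in> Q0 \<Longrightarrow> xi0 p = A0.gcon (gA (Inl p)) (gB (Inl p))"
  by (simp add: xi0_def Q0_def)

lemma xi1_inner: "r \<in> Q1 \<Longrightarrow> xi1 r = A1.gcon (gA (Inr r)) (gB (Inr r))"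
  by (simp add: xi1_def Q1_def)

lemma admissible0: assumes "q \<in> Q0" shows "A0.admissible {Inl k | k. k \<in> Q0 \<and> le0 k q}"
  unfolding A0.admissible_def
proof (intro conjI allI impI)
  fix i j assume ij: "(i, j) \<in> G0" "j \<in> {Inl k | k. k \<in> Q0 \<and> le0 k q}"
  then obtain a b where ab: "i = Inl a" "j = Inl b" "a \<in> Q0" "b \<in> Q0" "le0 a b" by (auto simp: G0_def)
  then have "le0 a q" using ij(2) trans0[OF Q0P[OF ab(3)] Q0P[OF ab(4)] Q0P[OF assms] ab(5)] by auto
  then show "i \<in> {Inl k | k. k \<in> Q0 \<and> le0 k q}" using ab by auto
qed auto

definition K1 :: "'b \<Rightarrow> ('a + 'b) set" where
  "K1 s = {Inr k | k. k \<in> Q1 \<and> le1 k s} \<union> {Inl p | p. p \<in> Q0 \<and> \<psi> p \<in> Q1 \<and> le1 (\<psi> p) s}"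

lemma admissible1: assumes "s \<in> Q1" shows "A1.admissible (K1 s)"
  unfolding A1.admissible_def
proof (intro conjI allI impI)
  fix i j assume ij: "(i, j) \<in> G1" "j \<in> K1 s"
  show "i \<in> K1 s"
  proof (cases "(i, j) \<in> G0")
    case True
    then obtain p q where pq: "i = Inl p" "j = Inl q" "p \<in> Q0" "q \<in> Q0" "le0 p q" by (auto simp: G0_def)
    then have q: "\<psi> q \<in> Q1" "le1 (\<psi> q) s" using ij(2) by (auto simp: K1_def)
    have m: "le1 (\<psi> p) (\<psi> q)" using mono pq Q0P by blast
    have pP: "\<psi> p \<in> P1" "\<psi> q \<in> P1" using psiP pq Q0P by auto
    have "\<psi> p \<noteq> top1"
    proof
      assume "\<psi> p = top1"
      then have "\<psi> q = top1" using m antisym1 top1le pP top1P by metis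
      then show False using q by (simp add: Q1_def)
    qed
    then have "\<psi> p \<in> Q1" using psi_inner pq by blast
    moreover have "le1 (\<psi> p) s" using trans1[OF pP Q1P[OF assms] m q(2)] .
    ultimately show ?thesis using pq by (auto simp: K1_def)
  next
    case False
    then obtain p q where pq: "i = Inr p" "j = Inr q" "p \<in> Q1" "q \<in> Q1" "le1 p q"
      using ij(1) by (auto simp: G1_def)
    then have "le1 p s" using ij(2) trans1 Q1P assms by (auto simp: K1_def)
    then show ?thesis using pq by (auto simp: K1_def)
  qed
next
  fix i j assume "(i, j) \<in> Sy1"
  then show "i \<in> K1 s \<longleftrightarrow> j \<in> K1 s" by (auto simp: Sy1_def K1_def)
next
  show "\<forall>i\<in>Wt1. i \<notin> K1 s" by (auto simp: Wt1_def K1_def Q1_def)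
qed

lemma inner_order0: assumes "p \<in> Q0" "q \<in> Q0"
  shows "le0 p q \<longleftrightarrow> xi0 p \<subseteq> xi0 q"
proof
  assume "xi0 p \<subseteq> xi0 q"
  moreover have "(gA (Inl p), gB (Inl p)) \<in> xi0 p"
    using A0.gcon_mem assms(1) by (simp add: xi0_inner I0_def)
  ultimately have "Inl p \<in> {Inl k | k. k \<in> Q0 \<and> le0 k q}"
    using A0.colour_below_admissible[OF admissible0[OF assms(2)], of "Inl q" "Inl p"]
      assms refl0[OF Q0P[OF assms(2)]] by (auto simp: I0_def xi0_inner)
  then show "le0 p q" by auto
next
  assume "le0 p q"
  then have "p = q \<or> (Inl p, Inl q) \<in> G0" using assms by (auto simp: G0_def)
  then show "xi0 p \<subseteq> xi0 q" using A0.gcon_edge_mono assms by (auto simp: xi0_inner)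
qed

lemma inner_order1: assumes "r \<in> Q1" "s \<in> Q1"
  shows "le1 r s \<longleftrightarrow> xi1 r \<subseteq> xi1 s"
proof
  assume "xi1 r \<subseteq> xi1 s"
  moreover have "(gA (Inr r), gB (Inr r)) \<in> xi1 r"
    using A1.gcon_mem assms(1) by (simp add: xi1_inner I1_def)
  ultimately have "Inr r \<in> K1 s"
    using A1.colour_below_admissible[OF admissible1[OF assms(2)], of "Inr s" "Inr r"]
      assms refl1[OF Q1P[OF assms(2)]] by (auto simp: I1_def K1_def xi1_inner)
  then show "le1 r s" by (auto simp: K1_def)
next
  assume "le1 r s"
  then have "r = s \<or> (Inr r, Inr s) \<in> G1" using assms by (auto simp: G1_def)
  then show "xi1 r \<subseteq> xi1 s" using A1.gcon_edge_mono assms by (auto simp: xi1_inner)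
qed

lemma colour0_in_L1: assumes "p \<in> Q0" shows "A1.gcon (gA (Inl p)) (gB (Inl p)) = xi1 (\<psi> p)"
proof (cases "\<psi> p = top1")
  case True
  then have "Inl p \<in> Wt1" using assms by (auto simp: Wt1_def)
  then show ?thesis using A1.gcon_witness_full True nd1 by (simp add: xi1_def)
next
  case False
  then have q: "\<psi> p \<in> Q1" using psi_inner assms by blast
  then have "(Inl p, Inr (\<psi> p)) \<in> Sy1" using assms by (auto simp: Sy1_def)
  then show ?thesis using A1.gcon_sym_edge_eq q by (simp add: xi1_inner)
qed

lemma iso0: "order_iso_Princ P0 le0 A0.C gle xi0"
proof (rule A0.order_iso_Princ_gadget[OF po0 lst0 gr0])
  show "xi0 bot0 = Id_on A0.C" "xi0 top0 = A0.C \<times> A0.C" using nd by (simp_all add: xi0_def)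
  show "\<exists>i\<in>I0. xi0 p = A0.gcon (gA i) (gB i) \<and> xi0 p \<noteq> A0.C \<times> A0.C" if "p \<in> P0 - {bot0, top0}" for p
    using that A0.colour_not_full[OF admissible0, of p "Inl p"] refl0
    by (auto simp: xi0_inner Q0_def I0_def)
  show "le0 p q \<longleftrightarrow> xi0 p \<subseteq> xi0 q" if "p \<in> P0 - {bot0, top0}" "q \<in> P0 - {bot0, top0}" for p q
    using inner_order0 that by (simp add: Q0_def)
  show "A0.gcon (gA i) (gB i) \<in> xi0 ` P0" if "i \<in> I0" for i
    using that xi0_inner Q0P by (auto simp: I0_def)
qed

lemma iso1: "order_iso_Princ P1 le1 A1.C gle xi1"
proof (rule A1.order_iso_Princ_gadget[OF po1 lst1 gr1])
  show "xi1 bot1 = Id_on A1.C" "xi1 top1 = A1.C \<times> A1.C" using nd1 by (simp_all add: xi1_def)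
  show "\<exists>i\<in>I1. xi1 r = A1.gcon (gA i) (gB i) \<and> xi1 r \<noteq> A1.C \<times> A1.C" if "r \<in> P1 - {bot1, top1}" for r
    using that A1.colour_not_full[OF admissible1, of r "Inr r"] refl1
    by (auto simp: xi1_inner Q1_def I1_def K1_def)
  show "le1 r s \<longleftrightarrow> xi1 r \<subseteq> xi1 s" if "r \<in> P1 - {bot1, top1}" "s \<in> P1 - {bot1, top1}" for r s
    using inner_order1 that by (simp add: Q1_def)
  show "A1.gcon (gA i) (gB i) \<in> xi1 ` P1" if "i \<in> I1" for i
  proof -
    from that consider p where "p \<in> Q0" "i = Inl p" | r where "r \<in> Q1" "i = Inr r"
      by (auto simp: I1_def)
    then show ?thesis
    proof cases
      case 1
      then have "\<psi> p \<in> P1" using psiP Q0P by blast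
      then show ?thesis using colour0_in_L1[OF 1(1)] 1(2) by (metis image_eqI)
    next
      case 2 then show ?thesis using xi1_inner[OF 2(1)] Q1P[OF 2(1)] by (metis image_eqI)
    qed
  qed
qed

lemma gcon01: assumes "x \<in> A0.C" "y \<in> A0.C"
  shows "\<exists>p\<in>P0. A0.gcon x y = xi0 p \<and> A1.gcon x y = xi1 (\<psi> p)"
proof (cases "x = y")
  case True
  then have "A0.gcon x y = xi0 bot0" "A1.gcon x y = xi1 (\<psi> bot0)"
    using A0.gcon_refl A1.gcon_refl C01 assms psib by (auto simp: xi0_def xi1_def)
  then show ?thesis using bot0P by blast
next
  case ne: False
  have x0: "gvalid I0 G0 {} {} x" and y0: "gvalid I0 G0 {} {} y" using assms by auto
  then have x1: "gvalid I1 G1 Sy1 Wt1 x" and y1: "gvalid I1 G1 Sy1 Wt1 y" using C01 by auto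
  have c0: "case colour (gmeet x y) (gjoin G0 {} x y) of None \<Rightarrow> A0.gcon x y = A0.C \<times> A0.C
      | Some i \<Rightarrow> i \<in> I0 \<and> A0.gcon x y = A0.gcon (gA i) (gB i)"
    by (rule A0.gcon_classify[OF x0 y0 ne])
  have c1: "case colour (gmeet x y) (gjoin G0 {} x y) of None \<Rightarrow> A1.gcon x y = A1.C \<times> A1.C
      | Some i \<Rightarrow> i \<in> I1 \<and> A1.gcon x y = A1.gcon (gA i) (gB i)"
    using A1.gcon_classify[OF x1 y1 ne] gjoin01[OF x0 y0] by simp
  show ?thesis
  proof (cases "colour (gmeet x y) (gjoin G0 {} x y)")
    case None
    then have "A0.gcon x y = xi0 top0" "A1.gcon x y = xi1 (\<psi> top0)"
      using c0 c1 nd nd1 psit by (simp_all add: xi0_def xi1_def)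
    then show ?thesis using top0P by blast
  next
    case (Some i)
    then obtain p where p: "p \<in> Q0" "A0.gcon x y = A0.gcon (gA (Inl p)) (gB (Inl p))"
        "A1.gcon x y = A1.gcon (gA (Inl p)) (gB (Inl p))"
      using c0 c1 by (auto simp: I0_def)
    then have "A0.gcon x y = xi0 p" "A1.gcon x y = xi1 (\<psi> p)"
      using xi0_inner[OF p(1)] colour0_in_L1[OF p(1)] by simp_all
    then show ?thesis using Q0P[OF p(1)] by blast
  qed
qed

lemma commutes:
  assumes "p \<in> P0" "x \<in> A0.C" "y \<in> A0.C" "xi0 p = A0.gcon x y"
  shows "A1.gcon x y = xi1 (\<psi> p)"
proof -
  obtain p' where p': "p' \<in> P0" "A0.gcon x y = xi0 p'" "A1.gcon x y = xi1 (\<psi> p')"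
    using gcon01[OF assms(2,3)] by blast
  have "inj_on xi0 P0" using iso0 unfolding order_iso_Princ_def bij_betw_def by blast
  then have "p = p'" using assms(1,4) p'(1,2) by (auto dest: inj_onD)
  then show ?thesis using p'(3) by simp
qed

lemma encode_inj_on: "inj_on encode A1.C"
  by (rule inj_onI) (rule A1.encode_inj[of colour_code tag_code], auto)

end

text \<open>The conclusion of the theorem: \<open>L\<^sub>0\<close> is a \{0,1\}-sublattice of the bounded lattice \<open>L\<^sub>1\<close>,
  \<open>\<xi>\<^sub>0, \<xi>\<^sub>1\<close> are order isomorphisms onto the principal congruences, and \<open>\<psi> = \<xi>\<^sub>1\<^sup>-\<^sup>1 \<circ> \<zeta> \<circ> \<xi>\<^sub>0\<close>,
  where \<open>\<zeta>\<close> sends \<open>con\<^sub>L\<^sub>0(x, y)\<close> to \<open>con\<^sub>L\<^sub>1(x, y)\<close>.\<close>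

definition realises ::
  "'a set \<Rightarrow> ('a \<Rightarrow> 'a \<Rightarrow> bool) \<Rightarrow> 'b set \<Rightarrow> ('b \<Rightarrow> 'b \<Rightarrow> bool) \<Rightarrow> ('a \<Rightarrow> 'b) \<Rightarrow>
    'c set \<Rightarrow> 'c set \<Rightarrow> ('c \<Rightarrow> 'c \<Rightarrow> bool) \<Rightarrow> ('a \<Rightarrow> ('c \<times> 'c) set) \<Rightarrow> ('b \<Rightarrow> ('c \<times> 'c) set) \<Rightarrow> bool"
  where
  "realises P0 le0 P1 le1 \<psi> L1 L0 le \<xi>0 \<xi>1 \<longleftrightarrow>
     bounded_lattice L1 le \<and> zo_sublattice L0 L1 le \<and>
     order_iso_Princ P0 le0 L0 le \<xi>0 \<and> order_iso_Princ P1 le1 L1 le \<xi>1 \<and>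
     (\<forall>p\<in>P0. \<forall>x\<in>L0. \<forall>y\<in>L0. \<xi>0 p = con L0 le x y \<longrightarrow> \<psi> p = the_inv_into P1 \<xi>1 (con L1 le x y))"

lemma singleton_realises:
  fixes e :: 'c
  assumes "le0 b0 b0" "le1 b1 b1" "\<psi> b0 = b1"
  shows "realises {b0} le0 {b1} le1 \<psi> {e} {e} (\<lambda>_ _. True) (\<lambda>_. Id_on {e}) (\<lambda>_. Id_on {e})"
proof -
  have lat: "is_lattice {e} (\<lambda>_ _. True)"
    unfolding is_lattice_def partial_order_on'_def is_lub_def is_glb_def by auto
  have "bounded_lattice {e} (\<lambda>_ _. True)"
    using lat unfolding bounded_lattice_def is_least_def is_greatest_def by auto
  moreover have "zo_sublattice {e} {e} (\<lambda>_ _. True)"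
    using ljoin_closed[OF lat] lmeet_closed[OF lat] unfolding zo_sublattice_def is_least_def is_greatest_def by auto
  moreover have "Princ {e} (\<lambda>_ _. True) = {Id_on {e}}"
    using con_refl_Id[OF lat] unfolding Princ_def by auto
  moreover have "con {e} (\<lambda>_ _. True) e e = Id_on {e}" using con_refl_Id[OF lat] by simp
  moreover have "the_inv_into {b1} (\<lambda>_. Id_on {e}) (Id_on {e}) = b1"
    by (simp add: the_inv_into_def)
  ultimately show ?thesis
    using assms unfolding realises_def order_iso_Princ_def bij_betw_def by auto
qed

lemma (in monotone_map_data) realisation:
  "\<exists>(L1 :: ('a + 'b + nat) set set) L0 le \<xi>0 \<xi>1. realises P0 le0 P1 le1 \<psi> L1 L0 le \<xi>0 \<xi>1"
proof -
  interpret T: inj_transport encode A1.C gle by unfold_locales (rule encode_inj_on)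
  have iso0': "order_iso_Princ P0 le0 (encode ` A0.C) T.tle (T.tmap \<circ> xi0)"
    by (rule T.order_iso_Princ_image[OF C01 A0.lattice iso0])
  have iso1': "order_iso_Princ P1 le1 (encode ` A1.C) T.tle (T.tmap \<circ> xi1)"
    by (rule T.order_iso_Princ_image[OF subset_refl A1.lattice iso1])
  have "\<psi> p = the_inv_into P1 (T.tmap \<circ> xi1) (con (encode ` A1.C) T.tle X Y)"
    if p: "p \<in> P0" and XY: "X \<in> encode ` A0.C" "Y \<in> encode ` A0.C"
      and eq: "(T.tmap \<circ> xi0) p = con (encode ` A0.C) T.tle X Y" for p X Y
  proof -
    obtain x y where xy: "x \<in> A0.C" "y \<in> A0.C" "X = encode x" "Y = encode y" using XY by blast
    have "xi0 p \<in> Princ A0.C gle" using iso0 p unfolding order_iso_Princ_def by (auto dest: bij_betwE)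
    moreover have "A0.gcon x y \<in> Princ A0.C gle" using xy unfolding Princ_def by blast
    ultimately have sub: "xi0 p \<subseteq> A1.C \<times> A1.C" "A0.gcon x y \<subseteq> A1.C \<times> A1.C"
      using Princ_subset[OF A0.lattice] C01 by (meson order_trans Sigma_mono)+
    have "T.tmap (xi0 p) = T.tmap (A0.gcon x y)"
      using eq T.con_image[OF C01 A0.lattice xy(1,2)] xy by simp
    then have "xi0 p = A0.gcon x y" using T.tmap_subset_iff[OF sub] T.tmap_subset_iff[OF sub(2,1)] by blast
    then have "A1.gcon x y = xi1 (\<psi> p)" by (rule commutes[OF p xy(1,2)])
    moreover have "x \<in> A1.C" "y \<in> A1.C" using xy C01 by auto
    ultimately have "con (encode ` A1.C) T.tle X Y = (T.tmap \<circ> xi1) (\<psi> p)"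
      using T.con_image[OF subset_refl A1.lattice] xy(3,4) by simp
    moreover have "inj_on (T.tmap \<circ> xi1) P1" using iso1' unfolding order_iso_Princ_def bij_betw_def by blast
    moreover have "\<psi> p \<in> P1" using psiP p by blast
    ultimately show ?thesis using the_inv_into_f_f[of "T.tmap \<circ> xi1" P1 "\<psi> p"] by simp
  qed
  then show ?thesis unfolding realises_def
    using T.bounded_lattice_image[OF subset_refl A1.bounded] T.zo_sublattice_image[OF A1.lattice zo_sublattice01]
      iso0' iso1' by blast
qed

theorem mainTheorem2:
  fixes P0 :: "'a set" and le0 :: "'a \<Rightarrow> 'a \<Rightarrow> bool"
    and P1 :: "'b set" and le1 :: "'b \<Rightarrow> 'b \<Rightarrow> bool"
    and \<psi> :: "'a \<Rightarrow> 'b"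
    and bot0 top0 :: 'a and bot1 top1 :: 'b
  assumes "bounded_ordered_set P0 le0"
    and "bounded_ordered_set P1 le1"
    and "is_least P0 le0 bot0" and "is_greatest P0 le0 top0"
    and "is_least P1 le1 bot1" and "is_greatest P1 le1 top1"
    and "\<forall>x\<in>P0. \<psi> x \<in> P1"
    and "\<psi> bot0 = bot1" and "\<psi> top0 = top1"
    and "\<forall>x\<in>P0. \<forall>y\<in>P0. le0 x y \<longrightarrow> le1 (\<psi> x) (\<psi> y)"
    and "\<forall>x\<in>P0. \<psi> x = bot1 \<longrightarrow> x = bot0"
  shows "\<exists>(L1 :: ('a + 'b + nat) set set) (L0 :: ('a + 'b + nat) set set) le \<xi>0 \<xi>1.
           bounded_lattice L1 le \<and> zo_sublattice L0 L1 le \<and>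
           order_iso_Princ P0 le0 L0 le \<xi>0 \<and> order_iso_Princ P1 le1 L1 le \<xi>1 \<and>
           (\<forall>p\<in>P0. \<forall>x\<in>L0. \<forall>y\<in>L0. \<xi>0 p = con L0 le x y \<longrightarrow>
               \<psi> p = the_inv_into P1 \<xi>1 (con L1 le x y))"
proof (cases "bot0 = top0")
  case True
  have po: "partial_order_on' P0 le0" "partial_order_on' P1 le1"
    using assms(1,2) unfolding bounded_ordered_set_def by auto
  have P0: "P0 = {bot0}" using least_eq_greatest_singleton[OF po(1) assms(3)] assms(4) True by simp
  have P1: "P1 = {bot1}"
    using least_eq_greatest_singleton[OF po(2) assms(5)] assms(6,8,9) True by simp
  have "le0 bot0 bot0" "le1 bot1 bot1" using assms(3,5) unfolding is_least_def by auto
  then have "realises P0 le0 P1 le1 \<psi> {{}} {{}} (\<lambda>_ _. True) (\<lambda>_. Id_on {{} :: ('a + 'b + nat) set})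
      (\<lambda>_. Id_on {{}})"
    unfolding P0 P1 using assms(8) by (rule singleton_realises)
  then show ?thesis unfolding realises_def by blast
next
  case False
  interpret monotone_map_data P0 le0 P1 le1 \<psi> bot0 top0 bot1 top1
    using assms False by unfold_locales auto
  show ?thesis using realisation unfolding realises_def .
qed

end
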